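(* Let $V\to W$ be a mutation of type $(j,k)\equiv(r-j,n-r-k)$ between configurations $V,W\in\mathbf{R}^{r\times n}$ in general position. Then $$f_W(x,y)-f_V(x,y)=\left(y^k-y^{n-r-k}\right)\left[(x+1)^{r-j}(x+y)^j-(x+1)^j(x+y)^{r-j}\right].$$
   Context: $n\ge r\ge1$, $[n]=\{1,\dots,n\}$. A configuration $V=[v_1|\cdots|v_n]\in\mathbf{R}^{r\times n}$ is in general position if any $r$ columns are linearly independent. For $F\in\{-1,0,+1\}^n$ let $F_+,F_0,F_-$ be the sets of $i$ with $F_i=+1,0,-1$. $\mathcal{F}(V)$ is the set of sign vectors $(\operatorname{sgn}\langle v_1,u\rangle,\dots,\operatorname{sgn}\langle v_n,u\rangle)$, $u\ne0$, and $f_V(x,y)=\sum_{F\in\mathcal{F}(V)}x^{|F_0|}y^{|F_-|}$. Two configurations $V,W$ in general position differ by a mutation if there is a continuous path $V(t)$, $t\in[0,1]$, $V(0)=V$, $V(1)=W$, and $t_0\in(0,1)$ such that $V(t)$ is in general position for $t\ne t_0$, at $t_0$ exactly one $r$-element set $R\subseteq[n]$ of columns is linearly dependent, all $(r-1)$-element sets of columns of $V(t_0)$ are linearly independent, and the sign of $\det[v_i(t)]_{i\in R}$ for $t<t_0$ is opposite to that for $t>t_0$. In this situation there is $Y\in\{-1,+1\}^n$ such that the elements of $\{-1,+1\}^n$ in $\mathcal{F}(W)\setminus\mathcal{F}(V)$ are exactly $Y$ and $-Y$; with $j=|R\cap Y_-|$ and $k=|Y_-\setminus R|$ the mutation $V\to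 W$ is said to be of type $(j,k)\equiv(r-j,n-r-k)$ (replacing $Y$ by $-Y$ swaps the two representatives). *)

theory Defs
  imports "HOL-Analysis.Analysis"
begin

text \<open>A configuration of n vectors in R^r is a map nat => real^'r; only the columns
  with index i < n (i.e. [n] = {0..<n}) matter. r = CARD('r).\<close>

definition cols_indep :: "(nat \<Rightarrow> real^'r) \<Rightarrow> nat set \<Rightarrow> bool" where
  "cols_indep v S \<longleftrightarrow> inj_on v S \<and> independent (v ` S)"

definition general_position :: "nat \<Rightarrow> (nat \<Rightarrow> real^'r) \<Rightarrow> bool" where
  "general_position n v \<longleftrightarrow>
     (\<forall>S. S \<subseteq> {..<n} \<and> card S = CARD('r) \<longrightarrow> cols_indep v S)"

definition col_det :: "(nat \<Rightarrow> real^'r) \<Rightarrow> ('r \<Rightarrow> nat) \<Rightarrow> real" where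
  "col_det v g = det (\<chi> a. \<chi> b. (v (g b)) $ a)"

definition covectors :: "nat \<Rightarrow> (nat \<Rightarrow> real^'r) \<Rightarrow> (nat \<Rightarrow> real) set" where
  "covectors n v = {F. \<exists>u::real^'r. u \<noteq> 0 \<and>
       F = (\<lambda>i. if i < n then sgn (inner (v i) u) else 0)}"

definition fpoly :: "nat \<Rightarrow> (nat \<Rightarrow> real^'r) \<Rightarrow> real \<Rightarrow> real \<Rightarrow> real" where
  "fpoly n v x y = (\<Sum>F\<in>covectors n v.
       x ^ card {i\<in>{..<n}. F i = 0} * y ^ card {i\<in>{..<n}. F i = -1})"

definition mutation_via ::
  "nat \<Rightarrow> (nat \<Rightarrow> real^'r) \<Rightarrow> (nat \<Rightarrow> real^'r) \<Rightarrow> (real \<Rightarrow> nat \<Rightarrow> real^'r)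
     \<Rightarrow> real \<Rightarrow> nat set \<Rightarrow> bool" where
  "mutation_via n V W P t0 R \<longleftrightarrow>
     (\<forall>i<n. continuous_on {0..1} (\<lambda>t. P t i)) \<and>
     (\<forall>i<n. P 0 i = V i) \<and> (\<forall>i<n. P 1 i = W i) \<and>
     0 < t0 \<and> t0 < 1 \<and>
     (\<forall>t\<in>{0..1}. t \<noteq> t0 \<longrightarrow> general_position n (P t)) \<and>
     {S. S \<subseteq> {..<n} \<and> card S = CARD('r) \<and> \<not> cols_indep (P t0) S} = {R} \<and>
     (\<forall>S. S \<subseteq> {..<n} \<and> card S = CARD('r) - 1 \<longrightarrow> cols_indep (P t0) S) \<and>
     (\<exists>g. bij_betw g (UNIV::'r set) R \<and>
        (\<forall>t1 t2. 0 \<le> t1 \<and> t1 < t0 \<and> t0 < t2 \<and> t2 \<le> 1 \<longrightarrow>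
           sgn (col_det (P t1) g) = - sgn (col_det (P t2) g)))"

end

theory Submission
  imports Defs
begin

text \<open>Along the path only the minor of the columns \<open>R\<close> changes sign. A tope (full sign vector)
  fails to be a covector exactly when some \<open>r + 1\<close> columns carry a linear relation whose signs
  agree with it; if these columns avoid \<open>R\<close>, the relation keeps its signs during the mutation.
  Hence a tope can only appear or disappear if its restriction to \<open>R\<close> is \<open>\<plusminus>\<close> the sign pattern of
  the circuit that \<open>R\<close> forms at time \<open>t\<^sub>0\<close>. Cramer's rule then shows that the new topes are
  \<open>\<plusminus>Y\<close>, where \<open>Y\<close> is simplicial (its cell is cut out by the hyperplanes of \<open>R\<close> alone), and the lost
  ones are \<open>\<plusminus>Y'\<close>, where \<open>Y'\<close> is \<open>Y\<close> reversed off \<open>R\<close>. The covectors gained are the faces of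
  \<open>\<plusminus>Y\<close> that agree with it off \<open>R\<close> and do not vanish on all of \<open>R\<close>, and similarly for those lost;
  summing \<open>x^#zeros * y^#minus\<close> over the faces of \<open>\<plusminus>Y\<close> gives
  \<open>y^k ((x+1)^(r-j) (x+y)^j - x^r) + y^(n-r-k) ((x+1)^j (x+y)^(r-j) - x^r)\<close>, over those of
  \<open>\<plusminus>Y'\<close> the same with \<open>k\<close> and \<open>n-r-k\<close> exchanged, and the difference is the stated product.\<close>

section \<open>Independence and determinants of columns\<close>

definition lin_relation :: "(nat \<Rightarrow> real^'r) \<Rightarrow> nat set \<Rightarrow> (nat \<Rightarrow> real) \<Rightarrow> bool" where
  "lin_relation v S a \<longleftrightarrow> (\<Sum>c\<in>S. a c *\<^sub>R v c) = 0"

definition indep_on :: "(nat \<Rightarrow> real^'r) \<Rightarrow> nat set \<Rightarrow> bool" where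
  "indep_on v S \<longleftrightarrow> (\<forall>a. lin_relation v S a \<longrightarrow> (\<forall>c\<in>S. a c = 0))"

lemma cols_indep_iff_indep_on:
  assumes "finite S"
  shows "cols_indep v S \<longleftrightarrow> indep_on v S"
proof
  assume "cols_indep v S"
  hence inj: "inj_on v S" and ind: "independent (v ` S)" by (auto simp: cols_indep_def)
  show "indep_on v S"
    unfolding indep_on_def lin_relation_def
  proof (intro allI impI ballI)
    fix a c assume sum0: "(\<Sum>c\<in>S. a c *\<^sub>R v c) = 0" and c: "c \<in> S"
    define u where "u x = a (the_inv_into S v x)" for x
    have "(\<Sum>x\<in>v ` S. u x *\<^sub>R x) = (\<Sum>c\<in>S. a c *\<^sub>R v c)"
      by (simp add: sum.reindex[OF inj] u_def the_inv_into_f_f[OF inj])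
    hence "u (v c) = 0"
      using ind sum0 c assms by (auto simp: independent_explicit)
    thus "a c = 0" by (simp add: u_def the_inv_into_f_f[OF inj c])
  qed
next
  assume indep: "indep_on v S"
  have inj: "inj_on v S"
  proof (rule inj_onI, rule ccontr)
    fix x y assume xy: "x \<in> S" "y \<in> S" "v x = v y" "x \<noteq> y"
    define a where "a c = (if c = x then 1 else if c = y then -1 else (0::real))" for c
    have "(\<Sum>c\<in>S. a c *\<^sub>R v c) = (\<Sum>c\<in>{x,y}. a c *\<^sub>R v c)"
      by (rule sum.mono_neutral_right) (use assms xy in \<open>auto simp: a_def\<close>)
    also have "\<dots> = 0" using xy by (simp add: a_def)
    finally have "a x = 0" using indep xy unfolding indep_on_def lin_relation_def by blast
    thus False by (simp add: a_def)
  qed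
  have "independent (v ` S)"
    unfolding independent_explicit
  proof (intro conjI allI impI ballI)
    show "finite (v ` S)" using assms by simp
    fix u x assume sum0: "(\<Sum>x\<in>v ` S. u x *\<^sub>R x) = 0" and "x \<in> v ` S"
    then obtain c where c: "c \<in> S" "x = v c" by blast
    have "(\<Sum>c\<in>S. u (v c) *\<^sub>R v c) = 0"
      using sum0 by (simp add: sum.reindex[OF inj])
    thus "u x = 0" using indep[unfolded indep_on_def lin_relation_def, rule_format, of "\<lambda>c. u (v c)"] c by auto
  qed
  thus "cols_indep v S" using inj by (simp add: cols_indep_def)
qed

lemma indep_on_subset:
  assumes "indep_on v S" "finite S" "D \<subseteq> S"
  shows "indep_on v D"
  unfolding indep_on_def lin_relation_def
proof (intro allI impI ballI)
  fix a c assume sum0: "(\<Sum>c\<in>D. a c *\<^sub>R v c) = 0" and c: "c \<in> D"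
  define b where "b x = (if x \<in> D then a x else 0)" for x
  have "(\<Sum>c\<in>S. b c *\<^sub>R v c) = (\<Sum>c\<in>D. a c *\<^sub>R v c)"
    by (rule sum.mono_neutral_cong_right) (use assms in \<open>auto simp: b_def\<close>)
  hence "b c = 0"
    using assms(1,3) sum0 c unfolding indep_on_def lin_relation_def by (metis subsetD)
  thus "a c = 0" using c by (simp add: b_def)
qed

lemma general_position_indep_on:
  assumes gp: "general_position n (v::nat \<Rightarrow> real^'r)" and rn: "CARD('r) \<le> n"
    and D: "D \<subseteq> {..<n}" "card D \<le> CARD('r)"
  shows "indep_on v D"
proof -
  obtain S where S: "D \<subseteq> S" "S \<subseteq> {..<n}" "card S = CARD('r)"
    using exists_subset_between[of D "CARD('r)" "{..<n}"] D rn by auto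
  have "finite S" using S(2) finite_subset by blast
  moreover have "cols_indep v S" using gp S unfolding general_position_def by blast
  ultimately show ?thesis using cols_indep_iff_indep_on indep_on_subset S(1) by blast
qed

lemma range_fun_upd_inj: "inj h \<Longrightarrow> range (h(b := c)) = insert c (range h - {h b})"
proof -
  assume "inj h"
  hence "h ` (UNIV - {b}) = range h - {h b}" by (simp add: image_set_diff)
  thus ?thesis unfolding fun_upd_image by (simp only: UNIV_I if_True)
qed

definition col_matrix :: "(nat \<Rightarrow> real^'r) \<Rightarrow> ('r \<Rightarrow> nat) \<Rightarrow> real^'r^'r" where
  "col_matrix v h = (\<chi> a b. v (h b) $ a)"

lemma col_det_eq_det_col_matrix: "col_det v h = det (col_matrix v h)"
  by (simp add: col_det_def col_matrix_def)

lemma col_det_cong: "(\<And>b. v (h b) = w (h b)) \<Longrightarrow> col_det v h = col_det w h"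
  by (simp add: col_det_def)

lemma col_matrix_mult: "col_matrix v h *v x = (\<Sum>b\<in>UNIV. x $ b *\<^sub>R v (h b))"
  unfolding matrix_mult_sum scalar_mult_eq_scaleR
  by (rule sum.cong) (auto simp: column_def col_matrix_def vec_eq_iff)

lemma transpose_col_matrix_mult: "transpose (col_matrix v h) *v u = (\<chi> b. inner (v (h b)) u)"
  by (simp add: matrix_mult_dot transpose_def col_matrix_def vec_eq_iff inner_vec_def)

lemma col_det_nonzero_iff_ker: "col_det v h \<noteq> 0 \<longleftrightarrow> (\<forall>x. col_matrix v h *v x = 0 \<longrightarrow> x = 0)"
  unfolding col_det_eq_det_col_matrix invertible_det_nz[symmetric] invertible_left_inverse
    matrix_left_invertible_ker ..

lemma sum_range_inj: "inj h \<Longrightarrow> (\<Sum>c\<in>range h. f c) = (\<Sum>b\<in>UNIV. f (h b))"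
  by (simp add: sum.reindex)

lemma col_det_nonzero_iff_indep_on:
  assumes "inj h"
  shows "col_det v h \<noteq> 0 \<longleftrightarrow> indep_on v (range h)"
proof
  assume det: "col_det v h \<noteq> 0"
  show "indep_on v (range h)" unfolding indep_on_def lin_relation_def
  proof (intro allI impI ballI)
    fix a c assume sum0: "(\<Sum>c\<in>range h. a c *\<^sub>R v c) = 0" and c: "c \<in> range h"
    have "col_matrix v h *v (\<chi> b. a (h b)) = 0"
      using sum0 by (simp add: col_matrix_mult sum_range_inj[OF assms])
    hence "(\<chi> b. a (h b)) = 0" using det col_det_nonzero_iff_ker by blast
    thus "a c = 0" using c by (auto simp: vec_eq_iff)
  qed
next
  assume indep: "indep_on v (range h)"
  show "col_det v h \<noteq> 0" unfolding col_det_nonzero_iff_ker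
  proof (intro allI impI)
    fix x assume "col_matrix v h *v x = 0"
    hence "(\<Sum>c\<in>range h. x $ inv h c *\<^sub>R v c) = 0"
      by (simp add: col_matrix_mult sum_range_inj[OF assms] inv_f_f[OF assms])
    hence "\<forall>c\<in>range h. x $ inv h c = 0"
      using indep[unfolded indep_on_def lin_relation_def, rule_format, of "\<lambda>c. x $ inv h c"] by blast
    thus "x = 0" by (auto simp: inv_f_f[OF assms] vec_eq_iff)
  qed
qed

lemma col_det_nonzero_solve:
  assumes "col_det v h \<noteq> 0"
  obtains u where "\<And>b. inner (v (h b)) u = y b"
proof -
  have "invertible (transpose (col_matrix v h))"
    using assms by (simp add: col_det_eq_det_col_matrix invertible_det_nz)
  then obtain B where B: "transpose (col_matrix v h) ** B = mat 1"
    unfolding invertible_right_inverse by blast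
  have "transpose (col_matrix v h) *v (B *v (\<chi> b. y b)) = (\<chi> b. y b)"
    by (simp add: matrix_vector_mul_assoc B)
  thus ?thesis using that unfolding transpose_col_matrix_mult by (auto simp: vec_eq_iff)
qed

lemma col_det_nonzero_orthogonal:
  assumes "col_det v h \<noteq> 0" "\<And>b. inner (v (h b)) u = 0"
  shows "u = 0"
proof -
  have "invertible (transpose (col_matrix v h))"
    using assms by (simp add: col_det_eq_det_col_matrix invertible_det_nz)
  hence "\<forall>x. transpose (col_matrix v h) *v x = 0 \<longrightarrow> x = 0"
    unfolding invertible_left_inverse matrix_left_invertible_ker .
  moreover have "transpose (col_matrix v h) *v u = 0"
    unfolding transpose_col_matrix_mult using assms(2) by (simp add: vec_eq_iff)
  ultimately show ?thesis by blast
qed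

lemma col_det_cramer:
  assumes det: "col_det v h \<noteq> 0"
  shows "(\<Sum>b\<in>UNIV. col_det v (h(b := c)) *\<^sub>R v (h b)) = col_det v h *\<^sub>R v c"
proof -
  have "invertible (col_matrix v h)" using det by (simp add: col_det_eq_det_col_matrix invertible_det_nz)
  then obtain B where B: "col_matrix v h ** B = mat 1"
    unfolding invertible_right_inverse by blast
  define x where "x = B *v v c"
  have Mx: "col_matrix v h *v x = v c" unfolding x_def matrix_vector_mul_assoc B by simp
  have "col_det v (h(b := c)) = det (\<chi> i j. if j = b then (col_matrix v h *v x) $ i else col_matrix v h $ i $ j)" for b
    unfolding Mx col_det_def by (rule arg_cong[where f=det]) (auto simp: col_matrix_def vec_eq_iff)
  hence "col_det v (h(b := c)) = x $ b * col_det v h" for b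
    unfolding cramer_lemma col_det_eq_det_col_matrix .
  hence "(\<Sum>b\<in>UNIV. col_det v (h(b := c)) *\<^sub>R v (h b))
      = col_det v h *\<^sub>R (\<Sum>b\<in>UNIV. x $ b *\<^sub>R v (h b))"
    by (simp add: scaleR_sum_right mult.commute)
  thus ?thesis using Mx by (simp add: col_matrix_mult)
qed

lemma cramer_expansion:
  assumes "col_det v h \<noteq> 0" "inj h"
  shows "v c = (\<Sum>d\<in>range h. (col_det v (h(inv h d := c)) / col_det v h) *\<^sub>R v d)"
proof -
  have "(\<Sum>d\<in>range h. (col_det v (h(inv h d := c)) / col_det v h) *\<^sub>R v d)
      = (1 / col_det v h) *\<^sub>R (\<Sum>b\<in>UNIV. col_det v (h(b := c)) *\<^sub>R v (h b))"
    by (simp add: sum_range_inj[OF assms(2)] inv_f_f[OF assms(2)] scaleR_sum_right)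
  thus ?thesis using col_det_cramer[OF assms(1)] assms(1) by simp
qed

definition cramer_relation :: "(nat \<Rightarrow> real^'r) \<Rightarrow> ('r \<Rightarrow> nat) \<Rightarrow> nat \<Rightarrow> nat \<Rightarrow> real" where
  "cramer_relation v h c d = (if d \<in> range h then col_det v (h(inv h d := c)) else - col_det v h)"

lemma lin_relation_cramer:
  assumes "col_det v h \<noteq> 0" "inj h" "c \<notin> range h"
  shows "lin_relation v (insert c (range h)) (cramer_relation v h c)"
proof -
  have "(\<Sum>d\<in>range h. cramer_relation v h c d *\<^sub>R v d) = col_det v h *\<^sub>R v c"
    using col_det_cramer[OF assms(1)]
    by (simp add: cramer_relation_def sum_range_inj[OF assms(2)] inv_f_f[OF assms(2)])
  thus ?thesis using assms(3) by (simp add: lin_relation_def cramer_relation_def)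
qed

lemma general_position_basis:
  assumes gp: "general_position n (v::nat \<Rightarrow> real^'r)"
    and S: "S \<subseteq> {..<n}" "card S = CARD('r)"
  obtains h where "inj h" "range h = S" "col_det v h \<noteq> 0"
proof -
  have fS: "finite S" using S finite_subset by blast
  obtain h where h: "bij_betw h (UNIV::'r set) S"
    using finite_same_card_bij[of "UNIV::'r set" S] fS S by auto
  hence hS: "inj h" "range h = S" by (auto simp: bij_betw_def)
  have "cols_indep v S" using gp S unfolding general_position_def by blast
  hence "col_det v h \<noteq> 0" using hS fS by (simp add: cols_indep_iff_indep_on col_det_nonzero_iff_indep_on)
  with hS that show ?thesis by blast
qed

lemma general_position_solve:
  assumes gp: "general_position n (v::nat \<Rightarrow> real^'r)" and rn: "CARD('r) \<le> n"
    and D: "D \<subseteq> {..<n}" "card D \<le> CARD('r)"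
  obtains u where "\<And>i. i \<in> D \<Longrightarrow> inner (v i) u = y i"
proof -
  obtain S where S: "D \<subseteq> S" "S \<subseteq> {..<n}" "card S = CARD('r)"
    using exists_subset_between[of D "CARD('r)" "{..<n}"] D rn by auto
  obtain h :: "'r \<Rightarrow> nat" where h: "inj h" "range h = S" "col_det v h \<noteq> 0"
    by (rule general_position_basis[OF gp S(2,3)])
  obtain u where u: "\<And>b. inner (v (h b)) u = y (h b)"
    using col_det_nonzero_solve[OF h(3), where y = "\<lambda>b. y (h b)"] by metis
  show ?thesis
  proof (rule that)
    fix i assume "i \<in> D"
    then obtain b where "i = h b" using S(1) h(2) by blast
    thus "inner (v i) u = y i" using u by simp
  qed
qed

lemma general_position_orthogonal:
  assumes gp: "general_position n (v::nat \<Rightarrow> real^'r)"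
    and D: "D \<subseteq> {..<n}" "CARD('r) \<le> card D" "\<And>i. i \<in> D \<Longrightarrow> inner (v i) u = 0"
  shows "u = 0"
proof -
  obtain S where S: "S \<subseteq> D" "card S = CARD('r)"
    using obtain_subset_with_card_n[OF D(2)] by blast
  have "S \<subseteq> {..<n}" using S(1) D(1) by (rule subset_trans)
  then obtain h :: "'r \<Rightarrow> nat" where h: "inj h" "range h = S" "col_det v h \<noteq> 0"
    using S(2) by (rule general_position_basis[OF gp])
  show ?thesis
  proof (rule col_det_nonzero_orthogonal[OF h(3)])
    fix b
    have "h b \<in> D" using S(1) h(2) by blast
    thus "inner (v (h b)) u = 0" by (rule D(3))
  qed
qed

section \<open>Covectors and topes\<close>

definition tope :: "nat \<Rightarrow> (nat \<Rightarrow> real) \<Rightarrow> bool" where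
  "tope n T \<longleftrightarrow> (\<forall>i<n. T i = 1 \<or> T i = -1) \<and> (\<forall>i\<ge>n. T i = 0)"

definition sign_vector :: "nat \<Rightarrow> (nat \<Rightarrow> real) \<Rightarrow> bool" where
  "sign_vector n F \<longleftrightarrow> (\<forall>i<n. F i = 1 \<or> F i = 0 \<or> F i = -1) \<and> (\<forall>i\<ge>n. F i = 0)"

definition completion :: "nat \<Rightarrow> (nat \<Rightarrow> real) \<Rightarrow> (nat \<Rightarrow> real) \<Rightarrow> bool" where
  "completion n F T \<longleftrightarrow> tope n T \<and> (\<forall>i<n. F i \<noteq> 0 \<longrightarrow> T i = F i)"

lemma tope_uminus: "tope n T \<Longrightarrow> tope n (- T)"
  by (auto simp: tope_def)

lemma tope_nonzero: "tope n T \<Longrightarrow> i < n \<Longrightarrow> T i \<noteq> 0"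
  by (auto simp: tope_def)

lemma card_le_imp_pos: "CARD('r::finite) \<le> n \<Longrightarrow> 0 < n"
  using zero_less_card_finite[where 'a='r] by linarith

lemma covectorsE:
  assumes "F \<in> covectors n v"
  obtains u where "u \<noteq> 0" "F = (\<lambda>i. if i < n then sgn (inner (v i) u) else 0)"
  using assms unfolding covectors_def by blast

lemma covectorsI:
  assumes "u \<noteq> 0" "\<And>i. i < n \<Longrightarrow> F i = sgn (inner (v i) u)" "\<And>i. n \<le> i \<Longrightarrow> F i = 0"
  shows "F \<in> covectors n v"
  unfolding covectors_def using assms by (auto intro!: exI[of _ u])

lemma covector_sign_vector: "F \<in> covectors n v \<Longrightarrow> sign_vector n F"
  by (erule covectorsE) (auto simp: sign_vector_def sgn_if)

lemma finite_covectors: "finite (covectors n v)"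
proof (rule finite_subset)
  show "covectors n v \<subseteq> {F. \<forall>i. (i \<in> {..<n} \<longrightarrow> F i \<in> {-1, 0, 1}) \<and> (i \<notin> {..<n} \<longrightarrow> F i = 0)}"
    by (auto dest!: covector_sign_vector simp: sign_vector_def)
  show "finite {F. \<forall>i. (i \<in> {..<n} \<longrightarrow> F i \<in> {-1, 0, 1::real}) \<and> (i \<notin> {..<n} \<longrightarrow> F i = 0)}"
    by (rule finite_set_of_finite_funs) simp_all
qed

lemma covector_nonzero:
  assumes gp: "general_position n (v::nat \<Rightarrow> real^'r)" and rn: "CARD('r) \<le> n"
    and F: "F \<in> covectors n v"
  shows "\<exists>i<n. F i \<noteq> 0"
proof (rule ccontr)
  assume "\<not> ?thesis"
  moreover obtain u where u: "u \<noteq> 0" "F = (\<lambda>i. if i < n then sgn (inner (v i) u) else 0)"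
    using F by (rule covectorsE)
  ultimately have "\<And>i. i \<in> {..<n} \<Longrightarrow> inner (v i) u = 0" by (auto simp: sgn_0_0)
  hence "u = 0" using general_position_orthogonal[OF gp, of "{..<n}"] rn by auto
  thus False using u by simp
qed

lemma sgn_add_small:
  fixes a b e :: real
  assumes "a \<noteq> 0" "0 < e" "e \<le> \<bar>a\<bar> / (\<bar>b\<bar> + 1)"
  shows "sgn (a + e * b) = sgn a"
proof -
  have "e * \<bar>b\<bar> \<le> \<bar>a\<bar> / (\<bar>b\<bar> + 1) * \<bar>b\<bar>" using assms by (intro mult_right_mono) auto
  also have "\<dots> < \<bar>a\<bar>" using assms by (simp add: field_simps)
  finally have "\<bar>e * b\<bar> < \<bar>a\<bar>" using assms by (simp add: abs_mult)
  thus ?thesis by (auto simp: sgn_if abs_if split: if_splits)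
qed

text \<open>A covector \<open>F = sgn (v\<^sup>T u)\<close> has at most \<open>r - 1\<close> zeros; perturbing \<open>u\<close> by a small
  multiple of a solution \<open>w\<close> of \<open>v\<^sub>i\<^sup>T w = T\<^sub>i\<close> on those zeros realises any completion \<open>T\<close>.\<close>

lemma completion_covector:
  assumes gp: "general_position n (v::nat \<Rightarrow> real^'r)" and rn: "CARD('r) \<le> n"
    and F: "F \<in> covectors n v" and T: "completion n F T"
  shows "T \<in> covectors n v"
proof -
  obtain u where u: "u \<noteq> 0" "F = (\<lambda>i. if i < n then sgn (inner (v i) u) else 0)"
    using F by (rule covectorsE)
  define Z where "Z = {i. i < n \<and> F i = 0}"
  define A where "A = {i. i < n \<and> F i \<noteq> 0}"
  have Zu: "\<And>i. i \<in> Z \<Longrightarrow> inner (v i) u = 0" by (auto simp: Z_def u sgn_0_0)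
  have Z_sub: "Z \<subseteq> {..<n}" by (auto simp: Z_def)
  have "card Z \<le> CARD('r)"
  proof (rule ccontr)
    assume "\<not> ?thesis"
    hence "u = 0" using general_position_orthogonal[OF gp Z_sub _ Zu] by simp
    thus False using u by simp
  qed
  then obtain w where w: "\<And>i. i \<in> Z \<Longrightarrow> inner (v i) w = T i"
    using general_position_solve[OF gp rn Z_sub] by metis
  define q where "q i = \<bar>inner (v i) u\<bar> / (\<bar>inner (v i) w\<bar> + 1)" for i
  define e where "e = (if A = {} then 1 else Min (q ` A))"
  have "finite A" by (auto simp: A_def)
  moreover have "\<And>i. i \<in> A \<Longrightarrow> q i > 0"
    by (auto simp: q_def A_def u sgn_0_0 split: if_splits)
  ultimately have e: "e > 0" "\<And>i. i \<in> A \<Longrightarrow> e \<le> q i" by (auto simp: e_def)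
  define u' where "u' = u + e *\<^sub>R w"
  have T_sgn: "T i = sgn (inner (v i) u')" if "i < n" for i
  proof (cases "F i = 0")
    case True
    hence "inner (v i) u' = e * T i" using that Zu w by (simp add: Z_def u'_def inner_add_right)
    moreover have "T i = 1 \<or> T i = -1" using T that by (auto simp: completion_def tope_def)
    ultimately show ?thesis using e by auto
  next
    case False
    hence "inner (v i) u \<noteq> 0" using that u by (auto simp: sgn_0_0)
    hence "sgn (inner (v i) u') = sgn (inner (v i) u)"
      unfolding u'_def inner_add_right inner_scaleR_right
      by (rule sgn_add_small[OF _ e(1)]) (use e(2) False that in \<open>auto simp: q_def A_def\<close>)
    thus ?thesis using T False that u by (auto simp: completion_def)
  qed
  have "u' \<noteq> 0"
    using T_sgn[of 0] T card_le_imp_pos[OF rn] by (auto simp: completion_def tope_def)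
  thus ?thesis by (rule covectorsI) (use T_sgn T in \<open>auto simp: completion_def tope_def\<close>)
qed

lemma sgn_pos_combination:
  fixes x y p q :: real
  assumes "p > 0" "q > 0" "sgn x = sgn y"
  shows "sgn (p * x + q * y) = sgn x"
proof -
  have "(x > 0 \<and> y > 0) \<or> (x = 0 \<and> y = 0) \<or> (x < 0 \<and> y < 0)"
    using assms(3) by (auto simp: sgn_if split: if_splits)
  moreover have "p * x + q * y > 0" if "x > 0" "y > 0"
    using assms that by (intro add_pos_pos mult_pos_pos)
  moreover have "p * x + q * y < 0" if "x < 0" "y < 0"
    using assms that by (intro add_neg_neg mult_pos_neg)
  ultimately show ?thesis by auto
qed

text \<open>Induction on the number of zeros: set one zero entry to \<open>\<plusminus>1\<close> and take the positive combination
  of the two realising vectors that cancels this entry.\<close>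

lemma covector_if_completions_covectors:
  assumes "sign_vector n F" "\<exists>i<n. F i \<noteq> 0" "\<And>T. completion n F T \<Longrightarrow> T \<in> covectors n v"
  shows "F \<in> covectors n v"
  using assms
proof (induction "card {i. i < n \<and> F i = 0}" arbitrary: F)
  case 0
  hence "completion n F F" by (auto simp: completion_def tope_def sign_vector_def)
  thus ?case by (rule "0.prems")
next
  case (Suc k)
  then obtain z where z: "z < n" "F z = 0"
    by (metis (mono_tags, lifting) Collect_empty_eq card.empty nat.distinct(1))
  have F_upd: "F(z := s) \<in> covectors n v" if s: "s = 1 \<or> s = -1" for s
  proof (rule Suc.hyps(1))
    have "{i. i < n \<and> (F(z := s)) i = 0} = {i. i < n \<and> F i = 0} - {z}" using s by auto
    thus "k = card {i. i < n \<and> (F(z := s)) i = 0}" using Suc.hyps(2) z by simp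
    show "sign_vector n (F(z := s))" using Suc.prems(1) s z by (auto simp: sign_vector_def)
    show "\<exists>i<n. (F(z := s)) i \<noteq> 0" using z s by auto
    show "T \<in> covectors n v" if "completion n (F(z := s)) T" for T
      using that z by (intro Suc.prems(3)) (auto simp: completion_def, metis)
  qed
  obtain u1 where u1: "F(z := 1) = (\<lambda>i. if i < n then sgn (inner (v i) u1) else 0)"
    using F_upd[of 1] by (auto elim: covectorsE)
  obtain u2 where u2: "F(z := -1) = (\<lambda>i. if i < n then sgn (inner (v i) u2) else 0)"
    using F_upd[of "-1"] by (auto elim: covectorsE)
  define a1 where "a1 = inner (v z) u1"
  define a2 where "a2 = inner (v z) u2"
  have "sgn a1 = 1" "sgn a2 = -1" using fun_cong[OF u1, of z] fun_cong[OF u2, of z] z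
    by (simp_all add: a1_def a2_def)
  hence a12: "a1 > 0" "a2 < 0" by (simp_all add: sgn_1_pos sgn_1_neg)
  define u where "u = (- a2) *\<^sub>R u1 + a1 *\<^sub>R u2"
  have inner_u: "inner (v i) u = (- a2) * inner (v i) u1 + a1 * inner (v i) u2" for i
    by (simp add: u_def inner_add_right inner_diff_right)
  have F_sgn: "F i = sgn (inner (v i) u)" if "i < n" for i
  proof (cases "i = z")
    case True
    thus ?thesis using z by (simp add: inner_u a1_def[symmetric] a2_def[symmetric])
  next
    case False
    hence "sgn (inner (v i) u1) = F i" "sgn (inner (v i) u2) = F i"
      using fun_cong[OF u1, of i] fun_cong[OF u2, of i] that by simp_all
    thus ?thesis unfolding inner_u using sgn_pos_combination[of "- a2" a1] a12 by simp
  qed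
  obtain i0 where "i0 < n" "F i0 \<noteq> 0" using Suc.prems(2) by blast
  hence "u \<noteq> 0" using F_sgn[of i0] by auto
  thus ?case by (rule covectorsI) (use F_sgn Suc.prems(1) in \<open>auto simp: sign_vector_def\<close>)
qed

lemma tope_covector_if_card_eq:
  assumes gp: "general_position n (v::nat \<Rightarrow> real^'r)" and n: "n = CARD('r)" and T: "tope n T"
  shows "T \<in> covectors n v"
proof -
  have "CARD('r) \<le> n" "card {..<n} \<le> CARD('r)" using n by simp_all
  then obtain u where u: "\<And>i. i \<in> {..<n} \<Longrightarrow> inner (v i) u = T i"
    using general_position_solve[OF gp _ subset_refl, where y = T] by blast
  have "T i = sgn (inner (v i) u)" if "i < n" for i using u[of i] T that by (auto simp: tope_def)
  moreover have "u \<noteq> 0" using u[of 0] tope_nonzero[OF T, of 0] n by auto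
  ultimately show ?thesis using T by (intro covectorsI) (auto simp: tope_def)
qed

section \<open>Obstructions\<close>

definition obstruction :: "(nat \<Rightarrow> real^'r) \<Rightarrow> (nat \<Rightarrow> real) \<Rightarrow> nat set \<Rightarrow> bool" where
  "obstruction v T C \<longleftrightarrow> (\<exists>a. lin_relation v C a \<and> (\<forall>c\<in>C. a c * T c > 0))"

lemma covector_no_obstruction:
  assumes T: "T \<in> covectors n v" and C: "C \<subseteq> {..<n}" "finite C" "C \<noteq> {}"
  shows "\<not> obstruction v T C"
proof
  assume "obstruction v T C"
  then obtain a where a: "lin_relation v C a" "\<And>c. c \<in> C \<Longrightarrow> a c * T c > 0"
    unfolding obstruction_def by blast
  obtain u where u: "T = (\<lambda>i. if i < n then sgn (inner (v i) u) else 0)"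
    using T by (rule covectorsE)
  have "a c * inner (v c) u > 0" if "c \<in> C" for c
    using a(2)[OF that] C that
    by (cases "inner (v c) u" "0::real" rule: linorder_cases) (auto simp: u zero_less_mult_iff)
  hence "0 < (\<Sum>c\<in>C. a c * inner (v c) u)" by (intro sum_pos C(2,3))
  also have "\<dots> = inner (\<Sum>c\<in>C. a c *\<^sub>R v c) u" by (simp add: inner_sum_left)
  also have "\<dots> = 0" using a(1) by (simp add: lin_relation_def)
  finally show False by simp
qed

text \<open>Gordan's alternative: if no \<open>u\<close> has \<open>T\<^sub>i v\<^sub>i\<^sup>T u > 0\<close> for all \<open>i\<close>, the vectors \<open>T\<^sub>i v\<^sub>i\<close>
  cannot be strictly separated from the origin.\<close>

lemma zero_in_convex_hull_if_not_covector:
  assumes T: "tope n T" and n: "0 < n" and notcov: "T \<notin> covectors n v"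
  shows "0 \<in> convex hull ((\<lambda>i. T i *\<^sub>R v i) ` {..<n})" (is "0 \<in> ?K")
proof (rule ccontr)
  assume "0 \<notin> ?K"
  moreover have "closed ?K"
    by (intro compact_imp_closed compact_convex_hull finite_imp_compact) simp
  ultimately obtain a b where ab: "0 < b" "\<And>x. x \<in> ?K \<Longrightarrow> inner a x > b"
    using separating_hyperplane_closed_0[of ?K] by auto
  have "T i * inner (v i) a > 0" if "i < n" for i
  proof -
    have "T i *\<^sub>R v i \<in> ?K" by (rule hull_inc) (use that in auto)
    thus ?thesis using ab by (fastforce simp: inner_commute)
  qed
  hence T_sgn: "T i = sgn (inner (v i) a)" if "i < n" for i
    using T that by (force simp: tope_def sgn_if zero_less_mult_iff)
  have "a \<noteq> 0" using T_sgn[OF n] T n by (auto simp: tope_def)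
  hence "T \<in> covectors n v" by (rule covectorsI) (use T_sgn T in \<open>auto simp: tope_def\<close>)
  thus False using notcov by simp
qed

text \<open>By Caratheodory the origin is a convex combination of at most \<open>r + 1\<close> of the \<open>T\<^sub>i v\<^sub>i\<close>;
  general position forces exactly \<open>r + 1\<close> of them, all with positive weight.\<close>

lemma tope_not_covector_obstruction:
  assumes gp: "general_position n (v::nat \<Rightarrow> real^'r)" and rn: "CARD('r) \<le> n"
    and T: "tope n T" and notcov: "T \<notin> covectors n v"
  obtains C where "C \<subseteq> {..<n}" "card C = Suc CARD('r)" "obstruction v T C"
proof -
  define w where "w i = T i *\<^sub>R v i" for i
  have "0 \<in> convex hull (w ` {..<n})"
    unfolding w_def by (rule zero_in_convex_hull_if_not_covector[OF T card_le_imp_pos[OF rn] notcov])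
  then obtain S \<mu> where S: "S \<subseteq> w ` {..<n}" "card S \<le> DIM(real^'r) + 1"
      "\<forall>x\<in>S. 0 \<le> \<mu> x" "sum \<mu> S = 1" "(\<Sum>x\<in>S. \<mu> x *\<^sub>R x) = 0"
    unfolding convex_hull_caratheodory by blast
  obtain C where C: "C \<subseteq> {..<n}" "inj_on w C" "S = w ` C"
    using S(1) subset_image_inj by meson
  have fin: "finite C" using C(1) finite_subset by blast
  define a where "a c = \<mu> (w c) * T c" for c
  have "(\<Sum>c\<in>C. a c *\<^sub>R v c) = (\<Sum>c\<in>C. \<mu> (w c) *\<^sub>R w c)" by (simp add: a_def w_def)
  also have "\<dots> = 0" using S(5) by (simp add: C(3) sum.reindex[OF C(2)])
  finally have rel: "lin_relation v C a" by (simp add: lin_relation_def)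
  have sum1: "(\<Sum>c\<in>C. \<mu> (w c)) = 1" using S(4) by (simp add: C(3) sum.reindex[OF C(2)])
  have nonzero_outside: "\<exists>c\<in>C - D. \<mu> (w c) \<noteq> 0" if D: "D \<subseteq> C" "card D \<le> CARD('r)" for D
  proof (rule ccontr)
    assume none: "\<not> ?thesis"
    hence "(\<Sum>c\<in>D. a c *\<^sub>R v c) = (\<Sum>c\<in>C. a c *\<^sub>R v c)"
      by (intro sum.mono_neutral_left fin D(1)) (auto simp: a_def)
    moreover have "indep_on v D" using general_position_indep_on[OF gp rn] D C(1) by blast
    ultimately have a0: "\<forall>c\<in>D. a c = 0" using rel unfolding indep_on_def lin_relation_def by metis
    have "\<mu> (w c) = 0" if "c \<in> C" for c
    proof (cases "c \<in> D")
      case True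
      hence "T c \<noteq> 0" using D(1) C(1) tope_nonzero[OF T] by blast
      moreover have "\<mu> (w c) * T c = 0" using a0 True by (simp add: a_def)
      ultimately show ?thesis by simp
    next
      case False
      thus ?thesis using none that by blast
    qed
    thus False using sum1 by simp
  qed
  have card_C: "card C = Suc CARD('r)"
  proof -
    have "card C \<le> Suc CARD('r)" using S(2) by (simp add: C(3) card_image[OF C(2)])
    moreover have "\<not> card C \<le> CARD('r)" using nonzero_outside[of C] by blast
    ultimately show ?thesis by simp
  qed
  have pos: "\<mu> (w c) > 0" if "c \<in> C" for c
    using S(3) C(3) that nonzero_outside[of "C - {c}"] fin card_C by fastforce
  have "a c * T c > 0" if "c \<in> C" for c
  proof -
    have "T c * T c = 1" using T C(1) that by (force simp: tope_def)
    thus ?thesis using pos[OF that] by (simp add: a_def mult.assoc)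
  qed
  hence "obstruction v T C" using rel unfolding obstruction_def by blast
  with C(1) card_C that show ?thesis by blast
qed

lemma lin_relation_proportional:
  assumes indep: "indep_on v (S - {c0})" and S: "finite S" "c0 \<in> S"
    and a: "lin_relation v S a" and b: "lin_relation v S b" and b0: "b c0 \<noteq> 0"
  shows "\<forall>c\<in>S. a c = (a c0 / b c0) * b c"
proof -
  define d where "d c = a c - (a c0 / b c0) * b c" for c
  have "(\<Sum>c\<in>S. d c *\<^sub>R v c) = (\<Sum>c\<in>S. a c *\<^sub>R v c) - (a c0 / b c0) *\<^sub>R (\<Sum>c\<in>S. b c *\<^sub>R v c)"
    by (simp add: d_def scaleR_diff_left sum_subtractf scaleR_sum_right)
  also have "\<dots> = 0" using a b by (simp add: lin_relation_def)
  moreover have "d c0 = 0" using b0 by (simp add: d_def)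
  ultimately have "(\<Sum>c\<in>S - {c0}. d c *\<^sub>R v c) = 0" using S by (simp add: sum.remove)
  hence "\<forall>c\<in>S - {c0}. d c = 0" using indep unfolding indep_on_def lin_relation_def by blast
  with \<open>d c0 = 0\<close> show ?thesis by (auto simp: d_def)
qed

lemma obstruction_iff_sign_pattern:
  assumes gp: "general_position n (v::nat \<Rightarrow> real^'r)" and rn: "CARD('r) \<le> n"
    and C: "C \<subseteq> {..<n}" "card C = Suc CARD('r)"
    and L: "lin_relation v C L" "\<forall>c\<in>C. L c \<noteq> 0"
  shows "obstruction v T C \<longleftrightarrow> (\<forall>c\<in>C. L c * T c > 0) \<or> (\<forall>c\<in>C. L c * T c < 0)"
proof
  assume "obstruction v T C"
  then obtain a where a: "lin_relation v C a" "\<forall>c\<in>C. a c * T c > 0"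
    unfolding obstruction_def by blast
  have fin: "finite C" "C \<noteq> {}" using C(2) by (auto intro: card_ge_0_finite)
  then obtain c0 where c0: "c0 \<in> C" by blast
  have "indep_on v (C - {c0})"
    using general_position_indep_on[OF gp rn, of "C - {c0}"] C c0 fin by auto
  hence "\<forall>c\<in>C. a c = (a c0 / L c0) * L c"
    using lin_relation_proportional fin(1) c0 a(1) L c0 by blast
  hence "0 < (a c0 / L c0) * (L c * T c)" if "c \<in> C" for c
    using a(2) that by (simp add: mult.assoc)
  hence "(0 < a c0 / L c0 \<and> 0 < L c * T c) \<or> (a c0 / L c0 < 0 \<and> L c * T c < 0)" if "c \<in> C" for c
    using that zero_less_mult_iff by blast
  thus "(\<forall>c\<in>C. L c * T c > 0) \<or> (\<forall>c\<in>C. L c * T c < 0)"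
    by (cases "0 < a c0 / L c0") auto
next
  assume "(\<forall>c\<in>C. L c * T c > 0) \<or> (\<forall>c\<in>C. L c * T c < 0)"
  thus "obstruction v T C"
  proof
    assume "\<forall>c\<in>C. L c * T c > 0"
    thus ?thesis using L(1) unfolding obstruction_def by blast
  next
    assume "\<forall>c\<in>C. L c * T c < 0"
    moreover have "lin_relation v C (\<lambda>c. - L c)" using L(1) by (simp add: lin_relation_def sum_negf)
    ultimately show ?thesis unfolding obstruction_def by (intro exI[of _ "\<lambda>c. - L c"]) auto
  qed
qed

section \<open>Simplicial topes\<close>

text \<open>Each \<open>Z\<^sub>e v\<^sub>e\<close> with \<open>e \<notin> R\<close> is a positive combination of the \<open>Z\<^sub>c v\<^sub>c\<close>, \<open>c \<in> R\<close>; so the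
  cell of \<open>Z\<close> is the simplicial cone cut out by the hyperplanes of \<open>R\<close> alone.\<close>

definition simplicial :: "nat \<Rightarrow> (nat \<Rightarrow> real^'r) \<Rightarrow> nat set \<Rightarrow> (nat \<Rightarrow> real) \<Rightarrow> bool" where
  "simplicial n v R Z \<longleftrightarrow> tope n Z \<and>
     (\<exists>\<beta>. \<forall>e\<in>{..<n} - R. v e = (\<Sum>c\<in>R. \<beta> e c *\<^sub>R v c) \<and> (\<forall>c\<in>R. Z e * \<beta> e c * Z c > 0))"

text \<open>For a simplicial tope \<open>Z\<close> these are the covectors that a mutation at \<open>R\<close> creates or
  destroys together with \<open>Z\<close>.\<close>

definition simplex_faces :: "nat \<Rightarrow> nat set \<Rightarrow> (nat \<Rightarrow> real) \<Rightarrow> (nat \<Rightarrow> real) set" where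
  "simplex_faces n R Z = {F. sign_vector n F \<and> (\<forall>e\<in>{..<n} - R. F e = Z e) \<and>
     (\<forall>c\<in>R. F c = 0 \<or> F c = Z c) \<and> (\<exists>c\<in>R. F c \<noteq> 0)}"

definition flip_outside :: "nat set \<Rightarrow> (nat \<Rightarrow> real) \<Rightarrow> nat \<Rightarrow> real" where
  "flip_outside R Z i = (if i \<in> R then Z i else - Z i)"

lemma simplicial_uminus: "simplicial n v R Z \<Longrightarrow> simplicial n v R (- Z)"
  unfolding simplicial_def tope_def by auto

lemma tope_flip_outside: "tope n Z \<Longrightarrow> tope n (flip_outside R Z)"
  by (auto simp: tope_def flip_outside_def)

lemma flip_outside_flip_outside [simp]: "flip_outside R (flip_outside R Z) = Z"
  by (auto simp: flip_outside_def)

lemma flip_outside_uminus: "flip_outside R (- Z) = - flip_outside R Z"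
  by (auto simp: flip_outside_def)

lemma simplicial_sgn_outside:
  assumes sim: "simplicial n v R Z" and R: "R \<subseteq> {..<n}" and e: "e \<in> {..<n} - R"
    and nonneg: "\<And>c. c \<in> R \<Longrightarrow> Z c * inner (v c) u \<ge> 0"
    and c1: "c1 \<in> R" "inner (v c1) u \<noteq> 0"
  shows "sgn (inner (v e) u) = Z e"
proof -
  obtain \<beta> where \<beta>: "v e = (\<Sum>c\<in>R. \<beta> e c *\<^sub>R v c)" "\<And>c. c \<in> R \<Longrightarrow> Z e * \<beta> e c * Z c > 0"
    using sim e unfolding simplicial_def by blast
  have Z: "Z i = 1 \<or> Z i = -1" if "i < n" for i using sim that by (auto simp: simplicial_def tope_def)
  have "Z e * inner (v e) u = (\<Sum>c\<in>R. (Z e * \<beta> e c * Z c) * (Z c * inner (v c) u))"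
  proof -
    have "Z c * Z c = 1" if "c \<in> R" for c using Z[of c] R that by force
    hence "(\<Sum>c\<in>R. (Z e * \<beta> e c * Z c) * (Z c * inner (v c) u)) = (\<Sum>c\<in>R. Z e * \<beta> e c * inner (v c) u)"
      by (intro sum.cong refl) (metis (no_types, lifting) mult.assoc mult.right_neutral)
    thus ?thesis by (simp add: \<beta>(1) inner_sum_left sum_distrib_left mult.assoc)
  qed
  also have "\<dots> > 0"
  proof (rule sum_pos2)
    show "finite R" using R finite_subset by blast
    have "Z c1 * inner (v c1) u > 0" using nonneg[OF c1(1)] c1 Z[of c1] R by force
    thus "0 < (Z e * \<beta> e c1 * Z c1) * (Z c1 * inner (v c1) u)" using \<beta>(2)[OF c1(1)] by simp
    show "0 \<le> (Z e * \<beta> e c * Z c) * (Z c * inner (v c) u)" if "c \<in> R" for c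
      using \<beta>(2)[OF that] nonneg[OF that] by simp
  qed (rule c1(1))
  finally show ?thesis using Z[of e] e by (auto simp: sgn_if zero_less_mult_iff)
qed

lemma simplex_face_covector:
  assumes gp: "general_position n (v::nat \<Rightarrow> real^'r)" and rn: "CARD('r) \<le> n"
    and R: "R \<subseteq> {..<n}" "card R = CARD('r)" and sim: "simplicial n v R Z"
    and F: "F \<in> simplex_faces n R Z"
  shows "F \<in> covectors n v"
proof -
  have F': "sign_vector n F" "\<forall>e\<in>{..<n} - R. F e = Z e" "\<forall>c\<in>R. F c = 0 \<or> F c = Z c"
    "\<exists>c\<in>R. F c \<noteq> 0"
    using F by (auto simp: simplex_faces_def)
  obtain u where u: "\<And>c. c \<in> R \<Longrightarrow> inner (v c) u = F c"
    using general_position_solve[OF gp rn R(1)] R(2) by (metis order_refl)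
  obtain c1 where c1: "c1 \<in> R" "F c1 \<noteq> 0" using F'(4) by blast
  have Z: "Z c = 1 \<or> Z c = -1" if "c \<in> R" for c
    using sim R that by (auto simp: simplicial_def tope_def)
  have nonneg: "Z c * inner (v c) u \<ge> 0" if "c \<in> R" for c
    using Z[OF that] u[OF that] F'(3) that by auto
  have F_sgn: "F i = sgn (inner (v i) u)" if "i < n" for i
  proof (cases "i \<in> R")
    case True
    thus ?thesis using Z[OF True] u[OF True] F'(3) by auto
  next
    case False
    thus ?thesis using simplicial_sgn_outside[OF sim R(1) _ nonneg c1(1)] u c1 F'(2) that by auto
  qed
  have "u \<noteq> 0" using u c1 by auto
  thus ?thesis by (rule covectorsI) (use F_sgn F'(1) in \<open>auto simp: sign_vector_def\<close>)
qed

lemma simplicial_covector_outside: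
  assumes R: "R \<subseteq> {..<n}" and sim: "simplicial n v R Z"
    and F: "F \<in> covectors n v" "\<forall>c\<in>R. F c = 0 \<or> F c = Z c" "\<exists>c\<in>R. F c \<noteq> 0"
  shows "\<forall>e\<in>{..<n} - R. F e = Z e"
proof -
  obtain u where u: "F = (\<lambda>i. if i < n then sgn (inner (v i) u) else 0)"
    using F(1) by (rule covectorsE)
  obtain c1 where c1: "c1 \<in> R" "F c1 \<noteq> 0" using F(3) by blast
  have nonneg: "Z c * inner (v c) u \<ge> 0" if c: "c \<in> R" for c
  proof -
    have "Z c = 1 \<or> Z c = -1" using sim c R by (auto simp: simplicial_def tope_def)
    moreover have "F c = sgn (inner (v c) u)" using c R by (auto simp: u)
    hence "sgn (inner (v c) u) = 0 \<or> sgn (inner (v c) u) = Z c" using F(2) c by metis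
    ultimately show ?thesis
      by (cases "inner (v c) u" "0::real" rule: linorder_cases) (auto simp: sgn_if dest: sym)
  qed
  have "inner (v c1) u \<noteq> 0" using c1 R by (auto simp: u sgn_0_0)
  thus ?thesis using simplicial_sgn_outside[OF sim R _ nonneg c1(1)] by (auto simp: u)
qed

lemma simplicial_tope_unique:
  assumes R: "R \<subseteq> {..<n}" "R \<noteq> {}" and sim: "simplicial n v R Z"
    and T: "tope n T" "T \<in> covectors n v" "\<forall>c\<in>R. T c = Z c"
  shows "T = Z"
proof
  fix i
  have "\<exists>c\<in>R. T c \<noteq> 0" using R T(1,3) tope_nonzero by fastforce
  hence "\<forall>e\<in>{..<n} - R. T e = Z e" using simplicial_covector_outside[OF R(1) sim T(2)] T(3) by blast
  thus "T i = Z i" using T(1,3) sim by (cases "i < n") (auto simp: tope_def simplicial_def)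
qed

lemma completion_of_face: "F \<in> simplex_faces n R Z \<Longrightarrow> tope n Z \<Longrightarrow> completion n F Z"
  by (auto simp: simplex_faces_def completion_def)

lemma simplex_faces_new_covectors:
  assumes gp1: "general_position n (v1::nat \<Rightarrow> real^'r)" and gp2: "general_position n (v2::nat \<Rightarrow> real^'r)"
    and rn: "CARD('r) \<le> n" and R: "R \<subseteq> {..<n}" "card R = CARD('r)" and e0: "e0 \<in> {..<n} - R"
    and sim2: "simplicial n v2 R Z" and sim1: "simplicial n v1 R (flip_outside R Z)"
    and F: "F \<in> simplex_faces n R Z"
  shows "F \<in> covectors n v2 - covectors n v1"
proof -
  have Z: "tope n Z" using sim2 by (simp add: simplicial_def)
  have "F \<notin> covectors n v1"
  proof
    assume "F \<in> covectors n v1"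
    hence "Z \<in> covectors n v1" using completion_covector[OF gp1 rn _ completion_of_face[OF F Z]] by blast
    moreover have "R \<noteq> {}" using R(2) by auto
    ultimately have "Z = flip_outside R Z"
      using simplicial_tope_unique[OF R(1) _ sim1 Z] by (simp add: flip_outside_def)
    hence "Z e0 = - Z e0" using e0 by (metis flip_outside_def Diff_iff)
    hence "Z e0 = 0" by simp
    thus False using Z e0 tope_nonzero by blast
  qed
  thus ?thesis using simplex_face_covector[OF gp2 rn R sim2 F] by blast
qed

lemma covectors_diff_subset_simplex_faces:
  assumes gp1: "general_position n (v1::nat \<Rightarrow> real^'r)"
    and gp2: "general_position n (v2::nat \<Rightarrow> real^'r)"
    and rn: "CARD('r) \<le> n" and R: "R \<subseteq> {..<n}" "card R = CARD('r)" and e0: "e0 \<in> {..<n} - R"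
    and sim2: "simplicial n v2 R Z"
    and new: "\<And>T. tope n T \<Longrightarrow> T \<in> covectors n v2 \<Longrightarrow> T \<notin> covectors n v1 \<Longrightarrow> T = Z \<or> T = - Z"
    and F: "F \<in> covectors n v2" "F \<notin> covectors n v1"
  shows "F \<in> simplex_faces n R Z \<union> simplex_faces n R (- Z)"
proof -
  obtain T where T: "completion n F T" "T \<notin> covectors n v1"
    using covector_if_completions_covectors[OF covector_sign_vector[OF F(1)] covector_nonzero[OF gp2 rn F(1)]]
      F(2) by blast
  have T_tope: "tope n T" using T(1) by (simp add: completion_def)
  have T_cov: "T \<in> covectors n v2" by (rule completion_covector[OF gp2 rn F(1) T(1)])
  have TZ: "T = Z \<or> T = - Z" using new T_tope T_cov T(2) by blast
  hence sim: "simplicial n v2 R T" using sim2 simplicial_uminus by auto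
  have R_ne: "R \<noteq> {}" using R(2) by auto
  have F_le: "\<forall>i<n. F i = 0 \<or> F i = T i" using T(1) by (auto simp: completion_def)
  have "\<exists>c\<in>R. F c \<noteq> 0"
  proof (rule ccontr)
    assume "\<not> ?thesis"
    hence "completion n F (- flip_outside R T)"
      using T(1) tope_uminus[OF tope_flip_outside[OF T_tope]]
      by (auto simp: completion_def flip_outside_def)
    hence "- flip_outside R T \<in> covectors n v2" by (rule completion_covector[OF gp2 rn F(1)])
    hence "- flip_outside R T = - T"
      using simplicial_tope_unique[OF R(1) R_ne simplicial_uminus[OF sim]]
        tope_uminus[OF tope_flip_outside[OF T_tope]]
      by (simp add: flip_outside_def)
    hence "T e0 = - T e0" using e0 by (metis flip_outside_def Diff_iff neg_equal_iff_equal uminus_apply)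
    hence "T e0 = 0" by simp
    thus False using T_tope e0 tope_nonzero by blast
  qed
  moreover have "\<forall>c\<in>R. F c = 0 \<or> F c = T c" using F_le R by auto
  ultimately have "\<forall>e\<in>{..<n} - R. F e = T e" using simplicial_covector_outside[OF R(1) sim F(1)] by blast
  hence "F \<in> simplex_faces n R T"
    using covector_sign_vector[OF F(1)] F_le R \<open>\<exists>c\<in>R. F c \<noteq> 0\<close> by (auto simp: simplex_faces_def)
  thus ?thesis using TZ by blast
qed

lemma covectors_diff_eq_simplex_faces:
  assumes gp1: "general_position n (v1::nat \<Rightarrow> real^'r)"
    and gp2: "general_position n (v2::nat \<Rightarrow> real^'r)"
    and rn: "CARD('r) \<le> n" and R: "R \<subseteq> {..<n}" "card R = CARD('r)" and e0: "e0 \<in> {..<n} - R"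
    and sim2: "simplicial n v2 R Z" and sim1: "simplicial n v1 R (flip_outside R Z)"
    and new: "\<And>T. tope n T \<Longrightarrow> T \<in> covectors n v2 \<Longrightarrow> T \<notin> covectors n v1 \<Longrightarrow> T = Z \<or> T = - Z"
  shows "covectors n v2 - covectors n v1 = simplex_faces n R Z \<union> simplex_faces n R (- Z)"
proof
  show "covectors n v2 - covectors n v1 \<subseteq> simplex_faces n R Z \<union> simplex_faces n R (- Z)"
    using covectors_diff_subset_simplex_faces[OF gp1 gp2 rn R e0 sim2 new] by blast
  have "simplicial n v2 R (- Z)" "simplicial n v1 R (flip_outside R (- Z))"
    using simplicial_uminus[OF sim2] simplicial_uminus[OF sim1] by (simp_all add: flip_outside_uminus)
  thus "simplex_faces n R Z \<union> simplex_faces n R (- Z) \<subseteq> covectors n v2 - covectors n v1"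
    using simplex_faces_new_covectors[OF gp1 gp2 rn R e0] sim1 sim2 by blast
qed

section \<open>Counting faces\<close>

definition sign_weight :: "nat \<Rightarrow> real \<Rightarrow> real \<Rightarrow> (nat \<Rightarrow> real) \<Rightarrow> real" where
  "sign_weight n x y F = x ^ card {i\<in>{..<n}. F i = 0} * y ^ card {i\<in>{..<n}. F i = -1}"

lemma fpoly_diff:
  fixes V W :: "nat \<Rightarrow> real^'r"
  shows "fpoly n W x y - fpoly n V x y =
     sum (sign_weight n x y) (covectors n W - covectors n V) -
     sum (sign_weight n x y) (covectors n V - covectors n W)"
proof -
  have split: "fpoly n v x y = sum (sign_weight n x y) (covectors n v \<inter> covectors n w) +
      sum (sign_weight n x y) (covectors n v - covectors n w)" for v w :: "nat \<Rightarrow> real^'r"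
    unfolding fpoly_def sign_weight_def by (rule sum.Int_Diff[OF finite_covectors])
  show ?thesis using split[of W V] split[of V W] by (simp add: Int_commute)
qed

lemma simplex_faces_eq_image:
  assumes R: "R \<subseteq> {..<n}" and Z: "tope n Z"
  shows "simplex_faces n R Z = (\<lambda>A i. if i \<in> R - A then 0 else Z i) ` (Pow R - {{}})"
proof (intro set_eqI iffI)
  fix F assume F: "F \<in> simplex_faces n R Z"
  define A where "A = {c\<in>R. F c \<noteq> 0}"
  have "F = (\<lambda>i. if i \<in> R - A then 0 else Z i)"
  proof
    fix i show "F i = (if i \<in> R - A then 0 else Z i)"
      using F Z by (cases "i \<in> R"; cases "i < n") (auto simp: simplex_faces_def sign_vector_def tope_def A_def)
  qed
  moreover have "A \<in> Pow R - {{}}" using F by (auto simp: simplex_faces_def A_def)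
  ultimately show "F \<in> (\<lambda>A i. if i \<in> R - A then 0 else Z i) ` (Pow R - {{}})" by blast
next
  fix F assume "F \<in> (\<lambda>A i. if i \<in> R - A then 0 else Z i) ` (Pow R - {{}})"
  then obtain A c where A: "A \<subseteq> R" "c \<in> A" "F = (\<lambda>i. if i \<in> R - A then 0 else Z i)" by blast
  have "Z c \<noteq> 0" using A R Z tope_nonzero by blast
  thus "F \<in> simplex_faces n R Z"
    using A Z by (auto simp: simplex_faces_def sign_vector_def tope_def)
qed

lemma finite_simplex_faces:
  "R \<subseteq> {..<n} \<Longrightarrow> tope n Z \<Longrightarrow> finite (simplex_faces n R Z)"
  by (simp add: simplex_faces_eq_image finite_subset)

lemma prod_if_eq_power:
  "finite A \<Longrightarrow> (\<Prod>c\<in>A. if P c then y else 1) = (y::real) ^ card {c\<in>A. P c}"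
  by (simp add: prod.If_cases Collect_conj_eq Int_commute)

lemma prod_sign_choice:
  fixes x y :: real
  assumes fin: "finite R" and Z: "\<And>c. c \<in> R \<Longrightarrow> Z c = 1 \<or> Z c = -1"
  shows "(\<Prod>c\<in>R. (if Z c = -1 then y else 1) + x) =
    (x + y) ^ card {c\<in>R. Z c = -1} * (x + 1) ^ card {c\<in>R. (Z c::real) = 1}"
proof -
  have "R \<inter> {c. Z c = -1} = {c\<in>R. Z c = -1}" by blast
  moreover have "R \<inter> - {c. Z c = -1} = {c\<in>R. Z c = 1}" using Z by auto
  moreover have "(\<Prod>c\<in>R. (if Z c = -1 then y else 1) + x) = (\<Prod>c\<in>R. if Z c = -1 then x + y else x + 1)"
    by (rule prod.cong) auto
  ultimately show ?thesis using fin by (simp add: prod.If_cases)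
qed

lemma sum_sign_weight_simplex_faces:
  assumes R: "R \<subseteq> {..<n}" and Z: "tope n Z"
  shows "sum (sign_weight n x y) (simplex_faces n R Z) =
    y ^ card {e\<in>{..<n} - R. Z e = -1} *
    ((x + 1) ^ card {c\<in>R. Z c = 1} * (x + y) ^ card {c\<in>R. Z c = -1} - x ^ card R)"
proof -
  define face where "face A = (\<lambda>i. if i \<in> R - A then 0 else Z i)" for A
  define k where "k = card {e\<in>{..<n} - R. Z e = -1}"
  have fin: "finite R" using R finite_subset by blast
  have Z_R: "Z c = 1 \<or> Z c = -1" if "c \<in> R" for c
  proof -
    have "c < n" using R that by auto
    thus ?thesis using Z unfolding tope_def by blast
  qed
  have inj: "inj_on face (Pow R)"
  proof (rule inj_onI)
    fix A B assume AB: "A \<in> Pow R" "B \<in> Pow R" "face A = face B"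
    have "c \<in> A \<longleftrightarrow> c \<in> B" if "c \<in> R" for c
      using fun_cong[OF AB(3), of c] Z_R[OF that] that by (auto simp: face_def split: if_splits)
    thus "A = B" using AB(1,2) by blast
  qed
  have weight: "sign_weight n x y (face A) =
      y ^ k * ((\<Prod>c\<in>A. if Z c = -1 then y else 1) * (\<Prod>c\<in>R - A. x))" if A: "A \<subseteq> R" for A
  proof -
    have "{i\<in>{..<n}. face A i = 0} = R - A"
      using R tope_nonzero[OF Z] by (auto simp: face_def)
    moreover have "{i\<in>{..<n}. face A i = -1} = {c\<in>A. Z c = -1} \<union> {e\<in>{..<n} - R. Z e = -1}"
      using A R by (auto simp: face_def)
    moreover have "card ({c\<in>A. Z c = -1} \<union> {e\<in>{..<n} - R. Z e = -1}) = card {c\<in>A. Z c = -1} + k"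
      unfolding k_def by (rule card_Un_disjoint) (use A fin in \<open>auto intro: finite_subset\<close>)
    ultimately show ?thesis
      using A fin by (simp add: sign_weight_def prod_if_eq_power finite_subset power_add mult_ac)
  qed
  have "sum (sign_weight n x y) (simplex_faces n R Z) = (\<Sum>A\<in>Pow R - {{}}. sign_weight n x y (face A))"
    unfolding simplex_faces_eq_image[OF R Z] face_def[symmetric]
    by (rule sum.reindex[OF inj_on_subset[OF inj], unfolded comp_def]) blast
  also have "\<dots> = (\<Sum>A\<in>Pow R. sign_weight n x y (face A)) - sign_weight n x y (face {})"
    using fin by (simp add: sum_diff1)
  also have "(\<Sum>A\<in>Pow R. sign_weight n x y (face A)) =
      y ^ k * (\<Prod>c\<in>R. (if Z c = -1 then y else 1) + x)"
    by (simp add: weight sum_distrib_left prod_add[OF fin])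
  also have "(\<Prod>c\<in>R. (if Z c = -1 then y else 1) + x) =
      (x + y) ^ card {c\<in>R. Z c = -1} * (x + 1) ^ card {c\<in>R. Z c = 1}"
    using prod_sign_choice[OF fin Z_R] .
  also have "sign_weight n x y (face {}) = y ^ k * x ^ card R" using weight[of "{}"] by simp
  finally show ?thesis by (simp add: k_def algebra_simps)
qed

lemma sum_sign_weight_simplex_faces_pair:
  assumes R: "R \<subseteq> {..<n}" and e0: "e0 \<in> {..<n} - R" and Z: "tope n Z"
  shows "sum (sign_weight n x y) (simplex_faces n R Z \<union> simplex_faces n R (- Z)) =
    y ^ card {e\<in>{..<n} - R. Z e = -1} *
      ((x + 1) ^ card {c\<in>R. Z c = 1} * (x + y) ^ card {c\<in>R. Z c = -1} - x ^ card R) +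
    y ^ card {e\<in>{..<n} - R. Z e = 1} *
      ((x + 1) ^ card {c\<in>R. Z c = -1} * (x + y) ^ card {c\<in>R. Z c = 1} - x ^ card R)"
proof -
  have "Z e0 \<noteq> 0" using Z e0 tope_nonzero by blast
  hence "simplex_faces n R Z \<inter> simplex_faces n R (- Z) = {}"
    using e0 by (auto simp: simplex_faces_def)
  hence "sum (sign_weight n x y) (simplex_faces n R Z \<union> simplex_faces n R (- Z)) =
      sum (sign_weight n x y) (simplex_faces n R Z) + sum (sign_weight n x y) (simplex_faces n R (- Z))"
    using finite_simplex_faces[OF R] Z tope_uminus by (simp add: sum.union_disjoint)
  moreover have "{i\<in>S. (- Z) i = 1} = {i\<in>S. Z i = -1}" "{i\<in>S. (- Z) i = -1} = {i\<in>S. Z i = 1}"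
    for S by auto
  ultimately show ?thesis
    using sum_sign_weight_simplex_faces[OF R Z] sum_sign_weight_simplex_faces[OF R tope_uminus[OF Z]]
    by (simp only:)
qed

lemma card_tope_plus:
  assumes "tope n Y" "S \<subseteq> {..<n}"
  shows "card {i\<in>S. Y i = 1} = card S - card {i\<in>S. Y i = -1}"
proof -
  have fin: "finite S" using assms(2) finite_subset by blast
  have "S = {i\<in>S. Y i = 1} \<union> {i\<in>S. Y i = -1}" using assms by (auto simp: tope_def)
  also have "card \<dots> = card {i\<in>S. Y i = 1} + card {i\<in>S. Y i = -1}"
    by (rule card_Un_disjoint) (use fin in auto)
  finally show ?thesis by simp
qed

lemma fpoly_change_formula:
  fixes V W :: "nat \<Rightarrow> real^'r"
  assumes R: "R \<subseteq> {..<n}" "card R = r" and e0: "e0 \<in> {..<n} - R" and Y: "tope n Y"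
    and new: "covectors n W - covectors n V = simplex_faces n R Y \<union> simplex_faces n R (- Y)"
    and lost: "covectors n V - covectors n W =
      simplex_faces n R (flip_outside R Y) \<union> simplex_faces n R (- flip_outside R Y)"
    and j: "j = card {c\<in>R. Y c = -1}" and k: "k = card {e\<in>{..<n} - R. Y e = -1}"
  shows "fpoly n W x y - fpoly n V x y =
    (y ^ k - y ^ (n - r - k)) * ((x + 1) ^ (r - j) * (x + y) ^ j - (x + 1) ^ j * (x + y) ^ (r - j))"
proof -
  have "card ({..<n} - R) = n - r" using R by (simp add: card_Diff_subset finite_subset)
  hence counts: "card {c\<in>R. Y c = 1} = r - j" "card {e\<in>{..<n} - R. Y e = 1} = n - r - k"
    using card_tope_plus[OF Y, of R] card_tope_plus[OF Y, of "{..<n} - R"] R j k by auto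
  have "{c\<in>R. flip_outside R Y c = s} = {c\<in>R. Y c = s}" for s
    by (auto simp: flip_outside_def)
  moreover have "{e\<in>{..<n} - R. flip_outside R Y e = -1} = {e\<in>{..<n} - R. Y e = 1}"
    "{e\<in>{..<n} - R. flip_outside R Y e = 1} = {e\<in>{..<n} - R. Y e = -1}"
    by (auto simp: flip_outside_def minus_equation_iff)
  ultimately have "fpoly n W x y - fpoly n V x y =
      (y ^ k * ((x + 1) ^ (r - j) * (x + y) ^ j - x ^ r) +
       y ^ (n - r - k) * ((x + 1) ^ j * (x + y) ^ (r - j) - x ^ r)) -
      (y ^ (n - r - k) * ((x + 1) ^ (r - j) * (x + y) ^ j - x ^ r) +
       y ^ k * ((x + 1) ^ j * (x + y) ^ (r - j) - x ^ r))"
    unfolding fpoly_diff new lost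
      sum_sign_weight_simplex_faces_pair[OF R(1) e0 Y]
      sum_sign_weight_simplex_faces_pair[OF R(1) e0 tope_flip_outside[OF Y]]
    by (simp only: counts R(2) j[symmetric] k[symmetric])
  thus ?thesis by (simp add: algebra_simps)
qed

section \<open>Mutations\<close>

lemma continuous_nonzero_sgn_eq:
  fixes f :: "real \<Rightarrow> real"
  assumes "continuous_on {a..b} f" "a \<le> b" "\<And>t. t \<in> {a..b} \<Longrightarrow> f t \<noteq> 0"
  shows "sgn (f a) = sgn (f b)"
proof (rule ccontr)
  assume "sgn (f a) \<noteq> sgn (f b)"
  moreover have "f a \<noteq> 0" "f b \<noteq> 0" using assms by auto
  ultimately have "(f a < 0 \<and> 0 < f b) \<or> (f b < 0 \<and> 0 < f a)" by (auto simp: sgn_if split: if_splits)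
  then obtain t where "a \<le> t" "t \<le> b" "f t = 0"
    using IVT'[of f a 0 b] IVT2'[of f b 0 a] assms(1,2) by (auto intro: less_imp_le)
  thus False using assms(3) by auto
qed

lemma continuous_zero_off_point:
  fixes \<Phi> :: "real \<Rightarrow> 'a::real_normed_vector"
  assumes "continuous_on {a..b} \<Phi>" "a < t0" "t0 < b" "\<And>t. t \<in> {a..b} \<Longrightarrow> t \<noteq> t0 \<Longrightarrow> \<Phi> t = 0"
  shows "\<Phi> t0 = 0"
proof -
  have "(\<Phi> \<longlongrightarrow> \<Phi> t0) (at t0)"
    using assms(1-3) unfolding continuous_on_def by (metis at_within_Icc_at atLeastAtMost_iff less_imp_le)
  moreover have "eventually (\<lambda>t. \<Phi> t = 0) (at t0 within {a..b})"
    unfolding eventually_at_filter using assms(4) by (intro always_eventually) auto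
  hence "(\<Phi> \<longlongrightarrow> 0) (at t0)" using assms(2,3) by (simp add: at_within_Icc_at tendsto_eventually)
  ultimately show ?thesis by (rule tendsto_unique[OF at_neq_bot])
qed

lemma continuous_on_col_det:
  assumes "\<And>b. continuous_on S (\<lambda>t. P t (h b))"
  shows "continuous_on S (\<lambda>t. col_det (P t) h)"
  unfolding col_det_def det_def by (intro continuous_intros continuous_on_component assms)

text \<open>By Cramer's rule \<open>det(g[c := e]) / det g\<close>, \<open>c \<in> R\<close>, are the coordinates of \<open>v\<^sub>e\<close> in the
  basis \<open>R\<close>, so the signs of these minors decide which topes are simplicial.\<close>

lemma simplicial_if_cramer_signs:
  assumes g: "inj g" "range g = R" and R: "R \<subseteq> {..<n}" and det: "col_det v g \<noteq> 0"
    and s: "\<And>c. c \<in> R \<Longrightarrow> s c = 1 \<or> s c = -1"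
    and \<epsilon>: "\<And>e. e \<in> {..<n} - R \<Longrightarrow> \<epsilon> e = 1 \<or> \<epsilon> e = -1"
    and signs: "\<And>e c. e \<in> {..<n} - R \<Longrightarrow> c \<in> R \<Longrightarrow> sgn (col_det v (g(inv g c := e))) = \<epsilon> e * s c"
  shows "simplicial n v R (\<lambda>i. if i \<in> R then s i else if i < n then \<epsilon> i * sgn (col_det v g) else 0)"
    (is "simplicial n v R ?Z")
  unfolding simplicial_def
proof (intro conjI exI[of _ "\<lambda>e c. col_det v (g(inv g c := e)) / col_det v g"] ballI)
  have D: "sgn (col_det v g) = 1 \<or> sgn (col_det v g) = -1" using det by (auto simp: sgn_if)
  hence "?Z i = 1 \<or> ?Z i = -1" if "i < n" for i
    using s[of i] \<epsilon>[of i] that by (cases "i \<in> R") auto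
  thus "tope n ?Z" using R by (auto simp: tope_def)
  fix e assume e: "e \<in> {..<n} - R"
  show "v e = (\<Sum>c\<in>R. (col_det v (g(inv g c := e)) / col_det v g) *\<^sub>R v c)"
    using cramer_expansion[OF det g(1), of e] unfolding g(2) .
  fix c assume c: "c \<in> R"
  have "sgn (?Z e * (col_det v (g(inv g c := e)) / col_det v g) * ?Z c) = 1"
    using \<epsilon>[OF e] s[OF c] D e c by (elim disjE) (simp_all add: sgn_mult sgn_divide signs[OF e c])
  thus "?Z e * (col_det v (g(inv g c := e)) / col_det v g) * ?Z c > 0"
    by (simp only: sgn_1_pos)
qed

lemma pm_one_eq_sgn:
  fixes a t :: real
  assumes "t = 1 \<or> t = -1"
  shows "0 < a * t \<Longrightarrow> t = sgn a" and "a * t < 0 \<Longrightarrow> t = - sgn a"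
  using assms by (auto simp: sgn_if zero_less_mult_iff mult_less_0_iff)

lemma sgn_eq_mult_sign_iff:
  fixes a b t :: real
  assumes "sgn a = sgn b"
  shows "0 < a * t \<longleftrightarrow> 0 < b * t" and "a * t < 0 \<longleftrightarrow> b * t < 0"
  using assms by (auto simp: sgn_if zero_less_mult_iff mult_less_0_iff split: if_splits)

locale mutation =
  fixes n :: nat and V W :: "nat \<Rightarrow> real^'r" and P :: "real \<Rightarrow> nat \<Rightarrow> real^'r"
    and t0 :: real and R :: "nat set" and g :: "'r \<Rightarrow> nat"
  assumes card_le: "CARD('r) \<le> n"
    and gp_V: "general_position n V" and gp_W: "general_position n W"
    and P_cont: "\<And>i. i < n \<Longrightarrow> continuous_on {0..1} (\<lambda>t. P t i)"
    and P_0: "\<And>i. i < n \<Longrightarrow> P 0 i = V i" and P_1: "\<And>i. i < n \<Longrightarrow> P 1 i = W i"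
    and t0: "0 < t0" "t0 < 1"
    and gp_P: "\<And>t. t \<in> {0..1} \<Longrightarrow> t \<noteq> t0 \<Longrightarrow> general_position n (P t)"
    and dependent_at_t0: "{S. S \<subseteq> {..<n} \<and> card S = CARD('r) \<and> \<not> cols_indep (P t0) S} = {R}"
    and indep_at_t0: "\<And>S. S \<subseteq> {..<n} \<Longrightarrow> card S = CARD('r) - 1 \<Longrightarrow> cols_indep (P t0) S"
    and g: "bij_betw g UNIV R"
    and sgn_flip: "\<And>t1 t2. 0 \<le> t1 \<Longrightarrow> t1 < t0 \<Longrightarrow> t0 < t2 \<Longrightarrow> t2 \<le> 1 \<Longrightarrow>
      sgn (col_det (P t1) g) = - sgn (col_det (P t2) g)"

lemma mutation_viaE:
  assumes "CARD('r) \<le> n" "general_position n V" "general_position n (W::nat \<Rightarrow> real^'r)"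
    and "mutation_via n V W P t0 R"
  obtains g where "mutation n V W P t0 R g"
  using assms(4) unfolding mutation_via_def
  by (elim conjE exE, intro that, unfold_locales) (use assms(1-3) in auto)

context mutation
begin

lemma R: "R \<subseteq> {..<n}" "card R = CARD('r)" "\<not> cols_indep (P t0) R"
  using dependent_at_t0 by blast+

lemma finite_R: "finite R"
  using R(1) finite_subset by blast

lemma inj_g: "inj g" and range_g: "range g = R"
  using g by (auto simp: bij_betw_def)

lemma indep_on_R_minus: "c \<in> R \<Longrightarrow> indep_on (P t0) (R - {c})"
proof -
  assume c: "c \<in> R"
  hence "cols_indep (P t0) (R - {c})" using R(1,2) finite_R by (intro indep_at_t0) auto
  thus ?thesis using finite_R by (simp add: cols_indep_iff_indep_on)
qed

lemma col_det_P_nonzero: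
  assumes h: "inj h" "range h \<subseteq> {..<n}" "range h \<noteq> R" and t: "t \<in> {0..1}"
  shows "col_det (P t) h \<noteq> 0"
proof -
  have card: "card (range h) = CARD('r)" using h(1) by (simp add: card_image)
  have "cols_indep (P t) (range h)"
  proof (cases "t = t0")
    case True
    show ?thesis
    proof (rule ccontr)
      assume "\<not> cols_indep (P t) (range h)"
      hence "range h \<in> {S. S \<subseteq> {..<n} \<and> card S = CARD('r) \<and> \<not> cols_indep (P t0) S}"
        using True h(2) card by simp
      thus False using dependent_at_t0 h(3) by simp
    qed
  next
    case False
    thus ?thesis using gp_P[OF t False] h(2) card unfolding general_position_def by blast
  qed
  thus ?thesis by (simp add: cols_indep_iff_indep_on col_det_nonzero_iff_indep_on h(1))
qed

lemma sgn_col_det_P: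
  assumes h: "inj h" "range h \<subseteq> {..<n}" "range h \<noteq> R" and t: "t \<in> {0..1}"
  shows "sgn (col_det (P t) h) = sgn (col_det V h)"
proof -
  have "continuous_on {0..t} (\<lambda>t. col_det (P t) h)"
    using t h(2) by (intro continuous_on_col_det continuous_on_subset[OF P_cont]) auto
  hence "sgn (col_det (P 0) h) = sgn (col_det (P t) h)"
    using t col_det_P_nonzero[OF h] by (intro continuous_nonzero_sgn_eq) auto
  moreover have "col_det (P 0) h = col_det V h" using h(2) P_0 by (intro col_det_cong) auto
  ultimately show ?thesis by simp
qed

lemma sgn_col_det_VW:
  assumes v: "v \<in> {V, W}" and h: "inj h" "range h \<subseteq> {..<n}" "range h \<noteq> R"
  shows "sgn (col_det v h) = sgn (col_det V h)" "col_det v h \<noteq> 0"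
proof -
  have "col_det (P 1) h = col_det W h" using h(2) P_1 by (intro col_det_cong) auto
  moreover have "col_det (P 0) h = col_det V h" using h(2) P_0 by (intro col_det_cong) auto
  ultimately have "sgn (col_det W h) = sgn (col_det V h)" "col_det V h \<noteq> 0"
    using sgn_col_det_P[OF h, of 1] col_det_P_nonzero[OF h, of 0] by simp_all
  thus "sgn (col_det v h) = sgn (col_det V h)" "col_det v h \<noteq> 0"
    using v by (auto simp: sgn_0_0)
qed

lemma col_det_g:
  shows "v \<in> {V, W} \<Longrightarrow> col_det v g \<noteq> 0" and "sgn (col_det W g) = - sgn (col_det V g)"
    and "col_det (P t0) g = 0"
proof -
  show "col_det v g \<noteq> 0" if "v \<in> {V, W}"
  proof -
    have "cols_indep v R" using that gp_V gp_W R(1,2) by (auto simp: general_position_def)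
    thus ?thesis
      by (simp add: cols_indep_iff_indep_on[OF finite_R] col_det_nonzero_iff_indep_on[OF inj_g] range_g)
  qed
  have "col_det (P 0) g = col_det V g" "col_det (P 1) g = col_det W g"
    using R(1) range_g P_0 P_1 by (auto intro!: col_det_cong)
  thus "sgn (col_det W g) = - sgn (col_det V g)" using sgn_flip[of 0 1] t0 by simp
  show "col_det (P t0) g = 0"
    using R(3) col_det_nonzero_iff_indep_on[OF inj_g, of "P t0"]
    by (simp add: cols_indep_iff_indep_on[OF finite_R] range_g)
qed

lemma replace_in_g:
  assumes e: "e \<in> {..<n} - R"
  shows "inj (g(b := e))" "range (g(b := e)) \<subseteq> {..<n}" "range (g(b := e)) \<noteq> R"
proof -
  have "e \<notin> range g" using e range_g by auto
  thus "inj (g(b := e))" using inj_g by (simp add: inj_on_fun_updI)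
  show "range (g(b := e)) \<subseteq> {..<n}" "range (g(b := e)) \<noteq> R"
    using range_fun_upd_inj[OF inj_g] e R(1) range_g by auto
qed

text \<open>Cramer's identity holds for every \<open>t \<noteq> t\<^sub>0\<close> and passes to the limit; at \<open>t\<^sub>0\<close>, where \<open>det g\<close>
  vanishes, it becomes a linear relation among the columns of \<open>R\<close>.\<close>

lemma cramer_minors_relation:
  assumes e: "e \<in> {..<n} - R"
  shows "lin_relation (P t0) R (\<lambda>c. col_det (P t0) (g(inv g c := e)))"
proof -
  define \<Phi> where "\<Phi> t = (\<Sum>b\<in>UNIV. col_det (P t) (g(b := e)) *\<^sub>R P t (g b)) - col_det (P t) g *\<^sub>R P t e"
    for t
  have P_g: "continuous_on {0..1} (\<lambda>t. P t (g b))" for b using P_cont R(1) range_g by blast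
  have P_e: "continuous_on {0..1} (\<lambda>t. P t e)" using P_cont e by blast
  have cont: "continuous_on {0..1} \<Phi>" unfolding \<Phi>_def
    using replace_in_g(2)[OF e] R(1) range_g
    by (intro continuous_intros continuous_on_col_det P_g P_e P_cont) auto
  have vanish: "\<Phi> t = 0" if "t \<in> {0..1}" "t \<noteq> t0" for t
  proof -
    have "cols_indep (P t) R" using gp_P[OF that] R(1,2) unfolding general_position_def by blast
    hence "col_det (P t) g \<noteq> 0"
      by (simp add: cols_indep_iff_indep_on[OF finite_R] col_det_nonzero_iff_indep_on[OF inj_g] range_g)
    thus ?thesis by (simp add: \<Phi>_def col_det_cramer)
  qed
  have "\<Phi> t0 = 0" by (rule continuous_zero_off_point[OF cont t0 vanish])
  moreover have "(\<Sum>c\<in>R. col_det (P t0) (g(inv g c := e)) *\<^sub>R P t0 c) =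
      (\<Sum>b\<in>UNIV. col_det (P t0) (g(b := e)) *\<^sub>R P t0 (g b))"
    unfolding range_g[symmetric] by (simp add: sum_range_inj[OF inj_g] inv_f_f[OF inj_g])
  ultimately show ?thesis using col_det_g(3) by (simp add: \<Phi>_def lin_relation_def)
qed

definition circuit :: "(nat \<Rightarrow> real) \<Rightarrow> bool" where
  "circuit a \<longleftrightarrow> lin_relation (P t0) R a \<and> (\<forall>c\<in>R. a c \<noteq> 0)"

lemma circuit_exists: "\<exists>a. circuit a"
proof -
  obtain a c0 where a: "lin_relation (P t0) R a" "c0 \<in> R" "a c0 \<noteq> 0"
    using R(3) by (auto simp: cols_indep_iff_indep_on[OF finite_R] indep_on_def lin_relation_def)
  have "a c \<noteq> 0" if c: "c \<in> R" for c
  proof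
    assume "a c = 0"
    hence "(\<Sum>d\<in>R - {c}. a d *\<^sub>R P t0 d) = 0"
      using a(1) c by (simp add: lin_relation_def sum.remove[OF finite_R c])
    hence "\<forall>d\<in>R - {c}. a d = 0" using indep_on_R_minus[OF c] unfolding indep_on_def lin_relation_def by blast
    thus False using \<open>a c = 0\<close> a(2,3) by blast
  qed
  thus ?thesis using a(1) by (auto simp: circuit_def)
qed

lemma sgn_cramer_minors:
  assumes a: "circuit a" and e: "e \<in> {..<n} - R"
  obtains \<epsilon> :: real where "\<epsilon> = 1 \<or> \<epsilon> = -1"
    "\<And>v c. v \<in> {V, W} \<Longrightarrow> c \<in> R \<Longrightarrow> sgn (col_det v (g(inv g c := e))) = \<epsilon> * sgn (a c)"
proof -
  define m where "m c = col_det (P t0) (g(inv g c := e))" for c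
  have "R \<noteq> {}" using R(2) by auto
  then obtain c0 where c0: "c0 \<in> R" by blast
  have m_a: "\<forall>c\<in>R. m c = (m c0 / a c0) * a c"
    using lin_relation_proportional[OF indep_on_R_minus[OF c0]] finite_R c0 cramer_minors_relation[OF e] a
    unfolding m_def circuit_def by blast
  have t0': "t0 \<in> {0..1}" using t0 by simp
  have m0: "m c0 \<noteq> 0" using col_det_P_nonzero[OF replace_in_g[OF e] t0'] by (simp add: m_def)
  show ?thesis
  proof
    show "sgn (m c0 / a c0) = 1 \<or> sgn (m c0 / a c0) = -1"
      using m0 a c0 by (auto simp: sgn_if circuit_def)
    fix v c assume v: "v \<in> {V, W}" and c: "c \<in> R"
    have "sgn (col_det v (g(inv g c := e))) = sgn (m c)"
      using sgn_col_det_VW[OF v replace_in_g[OF e]] sgn_col_det_P[OF replace_in_g[OF e] t0']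
      by (simp add: m_def)
    also have "\<dots> = sgn (m c0 / a c0) * sgn (a c)" using m_a c by (simp add: sgn_mult)
    finally show "sgn (col_det v (g(inv g c := e))) = sgn (m c0 / a c0) * sgn (a c)" .
  qed
qed

lemma general_position_VW: "v \<in> {V, W} \<Longrightarrow> general_position n v"
  using gp_V gp_W by auto

text \<open>An obstruction of size \<open>r + 1\<close> avoiding the dependent set \<open>R\<close> involves only minors that keep
  their sign during the mutation, so it obstructs \<open>T\<close> for \<open>V\<close> and \<open>W\<close> alike.\<close>

lemma obstruction_contains_R:
  assumes v: "v1 \<in> {V, W}" "v2 \<in> {V, W}"
    and C: "C \<subseteq> {..<n}" "card C = Suc CARD('r)" and obs: "obstruction v1 T C"
    and T: "T \<in> covectors n v2"
  shows "R \<subseteq> C"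
proof (rule ccontr)
  assume not_sub: "\<not> R \<subseteq> C"
  have fin: "finite C" "C \<noteq> {}" using C(2) by (auto intro: card_ge_0_finite)
  then obtain c0 where c0: "c0 \<in> C" by blast
  have "card (C - {c0}) = CARD('r)" using C(2) c0 fin by simp
  then obtain h where "bij_betw h (UNIV :: 'r set) (C - {c0})"
    using finite_same_card_bij fin(1) by (metis finite_Diff finite_class.finite_UNIV)
  hence h: "inj h" "range h = C - {c0}" by (auto simp: bij_betw_def)
  have C_eq: "C = insert c0 (range h)" and c0_h: "c0 \<notin> range h" using h(2) c0 by auto
  have minor: "sgn (col_det v h') = sgn (col_det V h') \<and> col_det v h' \<noteq> 0"
    if "v \<in> {V, W}" "inj h'" "range h' \<subseteq> C" for v h'
    using sgn_col_det_VW[OF that(1,2)] that(3) C(1) not_sub by blast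
  have upd: "inj (h(b := c0))" "range (h(b := c0)) \<subseteq> C" for b
    using h c0_h c0 range_fun_upd_inj[OF h(1)] by (auto intro: inj_on_fun_updI)
  define L where "L v = cramer_relation v h c0" for v
  have L: "lin_relation v C (L v)" "\<forall>c\<in>C. L v c \<noteq> 0" "\<And>c. sgn (L v c) = sgn (L V c)"
    if v: "v \<in> {V, W}" for v
  proof -
    have "range h \<subseteq> C" using h(2) by blast
    hence det: "sgn (col_det v h) = sgn (col_det V h)" "col_det v h \<noteq> 0" using minor[OF v h(1)] by auto
    show "lin_relation v C (L v)"
      unfolding L_def C_eq by (rule lin_relation_cramer[OF det(2) h(1) c0_h])
    show "\<forall>c\<in>C. L v c \<noteq> 0" "\<And>c. sgn (L v c) = sgn (L V c)"
      using det minor[OF v upd] h(2) by (auto simp: L_def cramer_relation_def sgn_minus)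
  qed
  have "obstruction v T C \<longleftrightarrow> obstruction V T C" if v: "v \<in> {V, W}" for v
    using obstruction_iff_sign_pattern[OF general_position_VW[OF v] card_le C L(1,2)[OF v]]
      obstruction_iff_sign_pattern[OF gp_V card_le C L(1,2)] sgn_eq_mult_sign_iff[OF L(3)[OF v]]
    by simp
  hence "obstruction v2 T C" using obs v by blast
  thus False using covector_no_obstruction[OF T C(1) fin] by blast
qed

lemma obstruction_sign_on_R:
  assumes a: "circuit a" and v: "v \<in> {V, W}" and T: "tope n T"
    and C: "C \<subseteq> {..<n}" "card C = Suc CARD('r)" "R \<subseteq> C" and obs: "obstruction v T C"
  shows "(\<forall>c\<in>R. T c = sgn (a c)) \<or> (\<forall>c\<in>R. T c = - sgn (a c))"
proof -
  have "card (C - R) = 1" using C finite_R R(2) by (simp add: card_Diff_subset)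
  then obtain e where Ce: "C - R = {e}" by (rule card_1_singletonE)
  have e: "e \<in> {..<n} - R" using Ce C(1) by auto
  have C_eq: "C = insert e (range g)" and e_g: "e \<notin> range g" using Ce C(3) range_g by auto
  define L where "L = cramer_relation v g e"
  have rel: "lin_relation v C L"
    unfolding L_def C_eq by (rule lin_relation_cramer[OF col_det_g(1)[OF v] inj_g e_g])
  obtain \<epsilon> :: real where \<epsilon>: "\<epsilon> = 1 \<or> \<epsilon> = -1"
    "\<And>c. c \<in> R \<Longrightarrow> sgn (col_det v (g(inv g c := e))) = \<epsilon> * sgn (a c)"
    using sgn_cramer_minors[OF a e] v by metis
  have L_R: "sgn (L c) = \<epsilon> * sgn (a c)" if "c \<in> R" for c
    using \<epsilon>(2)[OF that] that range_g by (simp add: L_def cramer_relation_def)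
  have "L c \<noteq> 0" if "c \<in> C" for c
  proof (cases "c \<in> R")
    case True
    hence "sgn (L c) \<noteq> 0" using L_R \<epsilon>(1) a by (auto simp: circuit_def sgn_0_0)
    thus ?thesis by auto
  next
    case False
    hence "c = e" using that Ce by blast
    thus ?thesis using col_det_g(1)[OF v] e_g by (simp add: L_def cramer_relation_def)
  qed
  hence "(\<forall>c\<in>C. L c * T c > 0) \<or> (\<forall>c\<in>C. L c * T c < 0)"
    using obstruction_iff_sign_pattern[OF general_position_VW[OF v] card_le C(1,2) rel] obs by blast
  moreover have T1: "T c = 1 \<or> T c = -1" if "c \<in> R" for c using T that R(1) by (auto simp: tope_def)
  ultimately have "(\<forall>c\<in>R. T c = sgn (L c)) \<or> (\<forall>c\<in>R. T c = - sgn (L c))"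
    using pm_one_eq_sgn[OF T1] C(3) by blast
  thus ?thesis using L_R \<epsilon>(1) by auto
qed

lemma changed_tope_on_R:
  assumes a: "circuit a" and v: "v1 \<in> {V, W}" "v2 \<in> {V, W}"
    and T: "tope n T" "T \<in> covectors n v2" "T \<notin> covectors n v1"
  shows "(\<forall>c\<in>R. T c = sgn (a c)) \<or> (\<forall>c\<in>R. T c = - sgn (a c))"
proof -
  obtain C where C: "C \<subseteq> {..<n}" "card C = Suc CARD('r)" "obstruction v1 T C"
    using tope_not_covector_obstruction[OF general_position_VW[OF v(1)] card_le T(1,3)] by blast
  have "R \<subseteq> C" by (rule obstruction_contains_R[OF v C T(2)])
  thus ?thesis using obstruction_sign_on_R[OF a v(1) T(1) C(1,2) _ C(3)] by blast
qed

text \<open>Off \<open>R\<close> the signs are dictated by the minors \<open>det(g[c := e])\<close>, which keep their sign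
  through the mutation, and by \<open>det g\<close>, which changes sign.\<close>

lemma simplicial_topes:
  assumes a: "circuit a"
  obtains Z where "simplicial n W R Z" "simplicial n V R (flip_outside R Z)" "\<forall>c\<in>R. Z c = sgn (a c)"
proof -
  have "\<forall>e\<in>{..<n} - R. \<exists>\<epsilon>::real. (\<epsilon> = 1 \<or> \<epsilon> = -1) \<and>
      (\<forall>v\<in>{V, W}. \<forall>c\<in>R. sgn (col_det v (g(inv g c := e))) = \<epsilon> * sgn (a c))"
    using sgn_cramer_minors[OF a] by metis
  then obtain \<epsilon> where \<epsilon>: "\<And>e. e \<in> {..<n} - R \<Longrightarrow> \<epsilon> e = 1 \<or> \<epsilon> e = -1"
    "\<And>v e c. v \<in> {V, W} \<Longrightarrow> e \<in> {..<n} - R \<Longrightarrow> c \<in> R \<Longrightarrow>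
      sgn (col_det v (g(inv g c := e))) = \<epsilon> e * sgn (a c)"
    by (metis (no_types, lifting) bchoice)
  have s: "sgn (a c) = 1 \<or> sgn (a c) = -1" if "c \<in> R" for c
    using a that by (auto simp: circuit_def sgn_if)
  define Z where "Z = (\<lambda>i. if i \<in> R then sgn (a i) else if i < n then \<epsilon> i * sgn (col_det W g) else 0)"
  have sim: "simplicial n v R (\<lambda>i. if i \<in> R then sgn (a i) else if i < n then \<epsilon> i * sgn (col_det v g) else 0)"
    if v: "v \<in> {V, W}" for v
    using inj_g range_g R(1) col_det_g(1)[OF v] s \<epsilon>(1) \<epsilon>(2)[OF v]
    by (rule simplicial_if_cramer_signs)
  have "(\<lambda>i. if i \<in> R then sgn (a i) else if i < n then \<epsilon> i * sgn (col_det V g) else 0) =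
      flip_outside R Z"
    using col_det_g(2) by (auto simp: Z_def flip_outside_def)
  hence "simplicial n V R (flip_outside R Z)" using sim[of V] by simp
  moreover have "simplicial n W R Z" using sim[of W] by (simp add: Z_def)
  moreover have "\<forall>c\<in>R. Z c = sgn (a c)" by (simp add: Z_def)
  ultimately show ?thesis using that by blast
qed

lemma changed_topes:
  assumes a: "circuit a" and v: "v1 \<in> {V, W}" "v2 \<in> {V, W}"
    and Z: "simplicial n v2 R Z" "\<forall>c\<in>R. Z c = sgn (a c)"
    and T: "tope n T" "T \<in> covectors n v2" "T \<notin> covectors n v1"
  shows "T = Z \<or> T = - Z"
proof -
  have R_ne: "R \<noteq> {}" using R(2) by auto
  from changed_tope_on_R[OF a v T] show ?thesis
  proof
    assume "\<forall>c\<in>R. T c = sgn (a c)"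
    hence "T = Z" using simplicial_tope_unique[OF R(1) R_ne Z(1) T(1,2)] Z(2) by auto
    thus ?thesis ..
  next
    assume "\<forall>c\<in>R. T c = - sgn (a c)"
    hence "T = - Z" using simplicial_tope_unique[OF R(1) R_ne simplicial_uminus[OF Z(1)] T(1,2)] Z(2) by auto
    thus ?thesis ..
  qed
qed

lemma circuit_sign_of_new_tope:
  assumes Y: "tope n Y" "Y \<in> covectors n W" "Y \<notin> covectors n V"
  obtains a where "circuit a" "\<forall>c\<in>R. Y c = sgn (a c)"
proof -
  obtain a where a: "circuit a" using circuit_exists by blast
  hence "circuit (- a)" by (simp add: circuit_def lin_relation_def sum_negf)
  thus ?thesis using changed_tope_on_R[OF a _ _ Y] a that by (auto simp: sgn_minus)
qed

lemma outside_R_nonempty: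
  assumes Y: "tope n Y" "Y \<notin> covectors n V"
  obtains e0 where "e0 \<in> {..<n} - R"
proof -
  have "{..<n} - R \<noteq> {}"
  proof
    assume "{..<n} - R = {}"
    hence "{..<n} = R" using R(1) by blast
    hence "n = CARD('r)" using R(2) by auto
    thus False using tope_covector_if_card_eq[OF gp_V _ Y(1)] Y(2) by blast
  qed
  thus ?thesis using that by blast
qed

lemma covectors_change:
  assumes Y: "tope n Y" "Y \<in> covectors n W" "Y \<notin> covectors n V" and e0: "e0 \<in> {..<n} - R"
  shows "covectors n W - covectors n V = simplex_faces n R Y \<union> simplex_faces n R (- Y)"
    and "covectors n V - covectors n W =
      simplex_faces n R (flip_outside R Y) \<union> simplex_faces n R (- flip_outside R Y)"
proof -
  obtain a where a: "circuit a" "\<forall>c\<in>R. Y c = sgn (a c)"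
    by (rule circuit_sign_of_new_tope[OF Y])
  obtain Z where Z: "simplicial n W R Z" "simplicial n V R (flip_outside R Z)" "\<forall>c\<in>R. Z c = sgn (a c)"
    by (rule simplicial_topes[OF a(1)])
  have "R \<noteq> {}" using R(2) by auto
  hence "Y = Z" using simplicial_tope_unique[OF R(1) _ Z(1) Y(1,2)] a(2) Z(3) by simp
  hence sim: "simplicial n W R Y" "simplicial n V R (flip_outside R Y)"
    and signs: "\<forall>c\<in>R. Y c = sgn (a c)" "\<forall>c\<in>R. flip_outside R Y c = sgn (a c)"
    using Z by (simp_all add: flip_outside_def)
  show "covectors n W - covectors n V = simplex_faces n R Y \<union> simplex_faces n R (- Y)"
    using changed_topes[OF a(1) _ _ sim(1) signs(1)]
    by (intro covectors_diff_eq_simplex_faces[OF gp_V gp_W card_le R(1,2) e0 sim]) auto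
  show "covectors n V - covectors n W =
      simplex_faces n R (flip_outside R Y) \<union> simplex_faces n R (- flip_outside R Y)"
    using changed_topes[OF a(1) _ _ sim(2) signs(2)] sim(1)
    by (intro covectors_diff_eq_simplex_faces[OF gp_W gp_V card_le R(1,2) e0 sim(2)]) auto
qed

end

theorem lemma3p1:
  fixes n :: nat and V W :: "nat \<Rightarrow> real^'r"
    and P :: "real \<Rightarrow> nat \<Rightarrow> real^'r" and t0 :: real and R :: "nat set"
    and Y :: "nat \<Rightarrow> real" and j k :: nat
  assumes "CARD('r) \<le> n"
    and "general_position n V" and "general_position n W"
    and "mutation_via n V W P t0 R"
    and "\<forall>i<n. Y i = 1 \<or> Y i = -1" and "\<forall>i\<ge>n. Y i = 0"
    and "{F \<in> covectors n W - covectors n V. \<forall>i<n. F i = 1 \<or> F i = -1} = {Y, - Y}"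
    and "j = card (R \<inter> {i\<in>{..<n}. Y i = -1})"
    and "k = card ({i\<in>{..<n}. Y i = -1} - R)"
  shows "\<forall>x y::real. fpoly n W x y - fpoly n V x y =
           (y ^ k - y ^ (n - CARD('r) - k)) *
           ((x + 1) ^ (CARD('r) - j) * (x + y) ^ j - (x + 1) ^ j * (x + y) ^ (CARD('r) - j))"
proof (intro allI)
  fix x y :: real
  obtain g where "mutation n V W P t0 R g" using assms(1-4) by (rule mutation_viaE)
  then interpret mutation n V W P t0 R g .
  have Y: "tope n Y" "Y \<in> covectors n W" "Y \<notin> covectors n V"
    using assms(5-7) by (auto simp: tope_def)
  obtain e0 where e0: "e0 \<in> {..<n} - R" using outside_R_nonempty[OF Y(1,3)] .
  have "j = card {c\<in>R. Y c = -1}" "k = card {e\<in>{..<n} - R. Y e = -1}"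
    using assms(8,9) R(1) by (auto intro: arg_cong[where f = card])
  with covectors_change[OF Y e0] show "fpoly n W x y - fpoly n V x y =
      (y ^ k - y ^ (n - CARD('r) - k)) *
      ((x + 1) ^ (CARD('r) - j) * (x + y) ^ j - (x + 1) ^ j * (x + y) ^ (CARD('r) - j))"
    by (intro fpoly_change_formula[OF R(1,2) e0 Y(1)])
qed

end
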